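(* Let $n\ge1$. Let $x_1,\dots,x_n$ be nonzero complex numbers with $x_i/x_j\notin\{q^m:m\in\mathbb{Z}\}$ for $i\ne j$. Let $b,z,w,r,s,t\in\mathbb{C}$ and $u,v,bz\in\mathbb{C}\setminus\{q^{-m}:m\ge0\}$. Assume $\max(|z|,|w|)<1$ and, for each $j=1,\dots,n$, $$\max(|z|,|w|)<|x_1x_2\cdots x_n|\,|x_j|^{-n}q^{(n-1)/2}.$$ For $\mathbf m=(m_1,\dots,m_n)\in\mathbb{Z}_{\ge0}^n$ put $|\mathbf m|=m_1+\cdots+m_n$ and $e_2(\mathbf m)=\sum_{1\le i<j\le n}m_im_j$, and define $$W(\mathbf m)=\prod_{1\le i<j\le n}\frac{1-\frac{x_i}{x_j}q^{m_i-m_j}}{1-\frac{x_i}{x_j}}\;\prod_{i,j=1}^n\big(q\tfrac{x_i}{x_j};q\big)_{m_i}^{-1}\;\prod_{i=1}^nx_i^{nm_i-|\mathbf m|}\;(-1)^{(n-1)|\mathbf m|}\;q^{m_2+2m_3+\cdots+(n-1)m_n+(n-1)\sum_{i=1}^n\binom{m_i}2-e_2(\mathbf m)}.$$ Then $$\sum_{\mathbf m\in\mathbb{Z}_{\ge0}^n}W(\mathbf m)\,(b;q)_{|\mathbf m|}\,\phi_{|\mathbf m|}^{(r,s,t;u,v)}(z,w|q)=\frac{(bz;q)_\infty}{(z;q)_\infty}\sum_{N=0}^\infty\frac{(r,s,t,b;q)_N}{(q,u,v,bz;q)_N}w^N.$$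
   Context: Throughout, $0<q<1$. $(\alpha;q)_0=1$, $(\alpha;q)_n=\prod_{j=0}^{n-1}(1-\alpha q^j)$, $(\alpha;q)_\infty=\prod_{j\ge0}(1-\alpha q^j)$, and $(\alpha_1,\dots,\alpha_r;q)_n=\prod_i(\alpha_i;q)_n$. $\begin{bmatrix}n\\k\end{bmatrix}=\frac{(q;q)_n}{(q;q)_k(q;q)_{n-k}}$. $$\phi_n^{(a,b,c;d,e)}(x,y|q)=\sum_{k=0}^n\begin{bmatrix}n\\k\end{bmatrix}\frac{(a,b,c;q)_k}{(d,e;q)_k}x^{n-k}y^k.$$ *)

theory Defs
  imports "HOL-Analysis.Analysis"
begin

definition qpoch :: "complex \<Rightarrow> complex \<Rightarrow> nat \<Rightarrow> complex" where
  "qpoch a q n = (\<Prod>j<n. (1 - a * q ^ j))"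

definition qpoch_inf :: "complex \<Rightarrow> complex \<Rightarrow> complex" where
  "qpoch_inf a q = lim (\<lambda>N. qpoch a q N)"

definition qbinom :: "complex \<Rightarrow> nat \<Rightarrow> nat \<Rightarrow> complex" where
  "qbinom q n k = qpoch q q n / (qpoch q q k * qpoch q q (n - k))"

definition qphi :: "complex \<Rightarrow> complex \<Rightarrow> complex \<Rightarrow> complex \<Rightarrow> complex \<Rightarrow> nat
    \<Rightarrow> complex \<Rightarrow> complex \<Rightarrow> complex \<Rightarrow> complex" where
  "qphi a b c d e n x y q =
     (\<Sum>k\<le>n. qbinom q n k * (qpoch a q k * qpoch b q k * qpoch c q k)
              / (qpoch d q k * qpoch e q k) * x ^ (n - k) * y ^ k)"

definition Wt :: "real \<Rightarrow> nat \<Rightarrow> (nat \<Rightarrow> complex) \<Rightarrow> (nat \<Rightarrow> nat) \<Rightarrow> complex" where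
  "Wt q n x m =
    (let Q = complex_of_real q;
         M = (\<Sum>i\<in>{1..n}. m i);
         e2 = (\<Sum>i\<in>{1..n}. \<Sum>j\<in>{i+1..n}. m i * m j)
     in (\<Prod>i\<in>{1..n}. \<Prod>j\<in>{i+1..n}.
            (1 - x i / x j * Q powi (int (m i) - int (m j))) / (1 - x i / x j))
      * inverse (\<Prod>i\<in>{1..n}. \<Prod>j\<in>{1..n}. qpoch (Q * x i / x j) Q (m i))
      * (\<Prod>i\<in>{1..n}. x i powi (int n * int (m i) - int M))
      * (-1) ^ ((n - 1) * M)
      * Q powi (int (\<Sum>i\<in>{1..n}. (i - 1) * m i)
                + int (n - 1) * int (\<Sum>i\<in>{1..n}. m i choose 2) - int e2))"

end

theory Submission
  imports Defs "HOL-Computational_Algebra.Polynomial"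
begin

text \<open>
  The sum over \<open>m\<close> is grouped by levels \<open>|m| = N\<close>. The weights on one level add up to
  \<open>1/(q;q)\<^sub>N\<close>: with the nodes \<open>x\<^sub>i q\<^bsup>m\<^sub>i\<^esup>\<close>, Lagrange interpolation turns the effect of raising
  a single \<open>m\<^sub>k\<close> into the recursion \<open>(1 - q\<^sup>N) S\<^sub>N = S\<^bsub>N-1\<^esub>\<close> for the level sums \<open>S\<^sub>N\<close>.
  The multiple series thereby collapses to \<open>\<Sum>\<^sub>N (b;q)\<^sub>N/(q;q)\<^sub>N \<phi>\<^sub>N(z,w)\<close>, and expanding
  \<open>\<phi>\<^sub>N\<close> and summing over the power of \<open>z\<close> with the q-binomial theorem gives the right-hand
  side. Absolute convergence, which justifies the regrouping, comes from the Gaussian factor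
  \<open>q\<^bsup>(m\<^sub>i - m\<^sub>j)\<^sup>2/2\<^esup>\<close> hidden in the power of \<open>q\<close>, which dominates the cross factors of the weight.
\<close>

section \<open>q-Pochhammer symbols\<close>

lemma qpoch_0 [simp]: "qpoch a q 0 = 1"
  by (simp add: qpoch_def)

lemma qpoch_Suc: "qpoch a q (Suc n) = qpoch a q n * (1 - a * q ^ n)"
  by (simp add: qpoch_def)

lemma qpoch_add: "qpoch a q (k + j) = qpoch a q k * qpoch (a * q ^ k) q j"
  by (induction j) (simp_all add: qpoch_Suc power_add mult_ac)

lemma qpoch_nonzero: "(\<And>i. 1 - a * q ^ i \<noteq> 0) \<Longrightarrow> qpoch a q n \<noteq> 0"
  by (simp add: qpoch_def)

lemma norm_mult_power_less_one:
  fixes a q :: "'a::real_normed_field"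
  assumes "norm a < 1" "norm q \<le> 1"
  shows "norm (a * q ^ i) < 1"
proof -
  have "norm a * norm q ^ i \<le> norm a"
    using assms by (intro mult_right_le_one_le power_le_one) auto
  then show ?thesis
    using assms(1) by (simp add: norm_mult norm_power)
qed

lemma one_minus_mult_power_nonzero:
  fixes a q :: "'a::real_normed_field"
  assumes "norm a < 1" "norm q \<le> 1"
  shows "1 - a * q ^ i \<noteq> 0"
  using norm_mult_power_less_one[OF assms, of i] by auto

lemma qpoch_qq_nonzero: "norm q < 1 \<Longrightarrow> qpoch q q n \<noteq> 0"
  by (intro qpoch_nonzero one_minus_mult_power_nonzero) auto

lemma convergent_prod_qpoch_factors:
  fixes a q :: complex
  assumes "norm q < 1"
  shows "convergent_prod (\<lambda>i. 1 - a * q ^ i)"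
proof (intro abs_convergent_prod_imp_convergent_prod summable_imp_abs_convergent_prod)
  have "summable (\<lambda>i. norm a * norm q ^ i)"
    using assms by (intro summable_mult summable_geometric) auto
  then show "summable (\<lambda>i. norm (1 - a * q ^ i - 1))"
    by (simp add: norm_mult norm_power)
qed

lemma qpoch_Suc_eq_prod_atMost: "qpoch a q (Suc n) = (\<Prod>i\<le>n. 1 - a * q ^ i)"
  by (simp add: qpoch_def lessThan_Suc_atMost)

lemma qpoch_tendsto:
  fixes a q :: complex
  assumes "norm q < 1"
  shows "(\<lambda>N. qpoch a q N) \<longlonglongrightarrow> qpoch_inf a q"
proof -
  have "convergent (\<lambda>n. qpoch a q (Suc n))"
    unfolding qpoch_Suc_eq_prod_atMost
    by (rule convergent_prod_imp_convergent[OF convergent_prod_qpoch_factors[OF assms]])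
  then show ?thesis
    unfolding qpoch_inf_def convergent_Suc_iff by (simp add: convergent_LIMSEQ_iff)
qed

lemma qpoch_inf_nonzero:
  fixes a q :: complex
  assumes "norm q < 1" and "\<And>i. 1 - a * q ^ i \<noteq> 0"
  shows "qpoch_inf a q \<noteq> 0"
proof -
  obtain L where L: "(\<lambda>n. \<Prod>i\<le>n. 1 - a * q ^ i) \<longlonglongrightarrow> L" "L \<noteq> 0"
    using convergent_prod_iff_nz_lim[of "\<lambda>i. 1 - a * q ^ i"]
      convergent_prod_qpoch_factors[OF assms(1), of a] assms(2) by blast
  then have "(\<lambda>n. qpoch a q (Suc n)) \<longlonglongrightarrow> L"
    by (simp add: qpoch_Suc_eq_prod_atMost)
  then have "(\<lambda>n. qpoch a q n) \<longlonglongrightarrow> L"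
    by (rule filterlim_sequentially_Suc[THEN iffD1])
  with qpoch_tendsto[OF assms(1)] have "qpoch_inf a q = L"
    by (rule LIMSEQ_unique)
  with L(2) show ?thesis by simp
qed

lemma Bseq_qpoch: "norm q < 1 \<Longrightarrow> Bseq (\<lambda>N. qpoch a q N)"
  using qpoch_tendsto convergent_imp_Bseq convergentI by blast

lemma Bseq_inverse_qpoch:
  fixes a q :: complex
  assumes "norm q < 1" and "\<And>i. 1 - a * q ^ i \<noteq> 0"
  shows "Bseq (\<lambda>N. inverse (qpoch a q N))"
proof -
  have "(\<lambda>N. inverse (qpoch a q N)) \<longlonglongrightarrow> inverse (qpoch_inf a q)"
    using qpoch_tendsto[OF assms(1)] qpoch_inf_nonzero[OF assms] by (intro tendsto_inverse)
  then show ?thesis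
    using convergent_imp_Bseq convergentI by blast
qed

lemma qpoch_inf_eq_qpoch_mult:
  fixes a q :: complex
  assumes "norm q < 1"
  shows "qpoch_inf a q = qpoch a q k * qpoch_inf (a * q ^ k) q"
proof -
  have "(\<lambda>N. qpoch a q (N + k)) \<longlonglongrightarrow> qpoch_inf a q"
    using qpoch_tendsto[OF assms] by (rule LIMSEQ_ignore_initial_segment)
  moreover have "(\<lambda>N. qpoch a q (N + k)) \<longlonglongrightarrow> qpoch a q k * qpoch_inf (a * q ^ k) q"
    unfolding add.commute[of _ k] qpoch_add by (intro tendsto_mult tendsto_const qpoch_tendsto assms)
  ultimately show ?thesis
    using LIMSEQ_unique by blast
qed

section \<open>The q-binomial theorem\<close>

lemma summable_powser_bounded_coeffs:
  fixes c :: "nat \<Rightarrow> complex"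
  assumes "\<And>j. norm (c j) \<le> K" and "norm w < 1"
  shows "summable (\<lambda>j. c j * w ^ j)"
proof (rule summable_comparison_test')
  show "summable (\<lambda>j. K * norm w ^ j)"
    using assms(2) by (intro summable_mult summable_geometric) auto
  show "norm (c j * w ^ j) \<le> K * norm w ^ j" for j
    unfolding norm_mult norm_power using assms(1)[of j] by (intro mult_right_mono) auto
qed

definition qbinomial_series :: "complex \<Rightarrow> complex \<Rightarrow> complex \<Rightarrow> complex" where
  "qbinomial_series a q w = (\<Sum>j. qpoch a q j / qpoch q q j * w ^ j)"

lemma Bseq_qbinomial_coeffs: "norm q < 1 \<Longrightarrow> Bseq (\<lambda>j. qpoch a q j / qpoch q q j)"
  unfolding divide_inverse
  by (intro Bseq_mult Bseq_qpoch Bseq_inverse_qpoch one_minus_mult_power_nonzero) auto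

lemma qbinomial_series_sums:
  assumes "norm q < 1" "norm w < 1"
  shows "(\<lambda>j. qpoch a q j / qpoch q q j * w ^ j) sums qbinomial_series a q w"
proof -
  obtain K where "\<And>j. norm (qpoch a q j / qpoch q q j) \<le> K"
    using Bseq_qbinomial_coeffs[OF assms(1)] by (metis BseqE)
  then have "summable (\<lambda>j. qpoch a q j / qpoch q q j * w ^ j)"
    using assms(2) by (rule summable_powser_bounded_coeffs)
  then show ?thesis
    unfolding qbinomial_series_def by (rule summable_sums)
qed

lemma isCont_qbinomial_series: "norm q < 1 \<Longrightarrow> isCont (qbinomial_series a q) 0"
  unfolding qbinomial_series_def
  by (rule isCont_powser[OF sums_summable[OF qbinomial_series_sums[of q "1/2"]]]) (auto simp: norm_divide)

lemma qbinomial_series_0 [simp]: "qbinomial_series a q 0 = 1"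
  unfolding qbinomial_series_def powser_zero by simp

lemma qbinomial_series_functional_eq:
  fixes a q w :: complex
  assumes q: "norm q < 1" and w: "norm w < 1"
  shows "(1 - w) * qbinomial_series a q w = (1 - a * w) * qbinomial_series a q (q * w)"
proof -
  define c where "c j = qpoch a q j / qpoch q q j" for j
  define f where "f = qbinomial_series a q"
  have qw: "norm (q * w) < 1"
    using norm_mult_power_less_one[OF w, of q 1] q by (simp add: mult.commute)
  have f_sums: "(\<lambda>j. c j * v ^ j) sums f v" if "norm v < 1" for v
    unfolding c_def f_def using q that by (rule qbinomial_series_sums)
  have c_Suc: "c (Suc j) * (1 - q ^ Suc j) = c j * (1 - a * q ^ j)" for j
    using qpoch_qq_nonzero[OF q, of j] qpoch_qq_nonzero[OF q, of "Suc j"]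
    by (simp add: c_def qpoch_Suc field_simps)
  have "(\<lambda>j. c (Suc j) * w ^ Suc j - c (Suc j) * (q * w) ^ Suc j)
        = (\<lambda>j. w * (c j * w ^ j) - a * w * (c j * (q * w) ^ j))"
  proof
    fix j
    have "c (Suc j) * w ^ Suc j - c (Suc j) * (q * w) ^ Suc j = c (Suc j) * (1 - q ^ Suc j) * w ^ Suc j"
      by (simp add: algebra_simps power_mult_distrib)
    then show "c (Suc j) * w ^ Suc j - c (Suc j) * (q * w) ^ Suc j =
               w * (c j * w ^ j) - a * w * (c j * (q * w) ^ j)"
      unfolding c_Suc by (simp add: algebra_simps power_mult_distrib)
  qed
  moreover have "(\<lambda>j. w * (c j * w ^ j) - a * w * (c j * (q * w) ^ j))
                   sums (w * f w - a * w * f (q * w))"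
    using f_sums[OF w] f_sums[OF qw] by (intro sums_diff sums_mult)
  ultimately have "(\<lambda>j. c (Suc j) * w ^ Suc j - c (Suc j) * (q * w) ^ Suc j)
                     sums (w * f w - a * w * f (q * w))"
    by simp
  then have "(\<lambda>j. c j * w ^ j - c j * (q * w) ^ j)
               sums (w * f w - a * w * f (q * w) + (c 0 * w ^ 0 - c 0 * (q * w) ^ 0))"
    by (rule sums_Suc)
  then have "(\<lambda>j. c j * w ^ j - c j * (q * w) ^ j) sums (w * f w - a * w * f (q * w))"
    by simp
  moreover have "(\<lambda>j. c j * w ^ j - c j * (q * w) ^ j) sums (f w - f (q * w))"
    using f_sums[OF w] f_sums[OF qw] by (rule sums_diff)
  ultimately have "f w - f (q * w) = w * f w - a * w * f (q * w)"
    using sums_unique2 by blast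
  then show ?thesis
    unfolding f_def by (simp add: algebra_simps)
qed

text \<open>Iterating the functional equation gives
  \<open>(z;q)\<^sub>N f(z) = (az;q)\<^sub>N f(q\<^sup>N z)\<close>, and \<open>f(q\<^sup>N z) \<longrightarrow> f(0) = 1\<close>.\<close>

theorem qbinomial_theorem:
  fixes a q z :: complex
  assumes q: "norm q < 1" and z: "norm z < 1"
  shows "(\<lambda>j. qpoch a q j / qpoch q q j * z ^ j) sums (qpoch_inf (a * z) q / qpoch_inf z q)"
proof -
  define f where "f = qbinomial_series a q"
  have qNz: "norm (q ^ N * z) < 1" for N
    using norm_mult_power_less_one[OF z, of q N] q by (simp add: mult.commute)
  have f_iterate: "qpoch z q N * f z = qpoch (a * z) q N * f (q ^ N * z)" for N
  proof (induction N)
    case (Suc N)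
    have "qpoch z q (Suc N) * f z = qpoch (a * z) q N * ((1 - q ^ N * z) * f (q ^ N * z))"
      using Suc by (simp add: qpoch_Suc mult_ac)
    also have "(1 - q ^ N * z) * f (q ^ N * z) = (1 - a * (q ^ N * z)) * f (q * (q ^ N * z))"
      unfolding f_def by (rule qbinomial_series_functional_eq[OF q qNz])
    finally show ?case by (simp add: qpoch_Suc mult_ac)
  qed simp
  have "(\<lambda>N. q ^ N * z) \<longlonglongrightarrow> 0"
    using q by (intro tendsto_mult_left_zero LIMSEQ_power_zero)
  then have "(\<lambda>N. f (q ^ N * z)) \<longlonglongrightarrow> 1"
    using isCont_tendsto_compose[OF isCont_qbinomial_series[OF q]] unfolding f_def by fastforce
  then have "(\<lambda>N. qpoch z q N * f z) \<longlonglongrightarrow> qpoch_inf (a * z) q * 1"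
    unfolding f_iterate by (intro tendsto_mult qpoch_tendsto q)
  moreover have "(\<lambda>N. qpoch z q N * f z) \<longlonglongrightarrow> qpoch_inf z q * f z"
    by (intro tendsto_mult qpoch_tendsto q tendsto_const)
  ultimately have "qpoch_inf z q * f z = qpoch_inf (a * z) q"
    using LIMSEQ_unique by fastforce
  moreover have "qpoch_inf z q \<noteq> 0"
    using q z by (intro qpoch_inf_nonzero one_minus_mult_power_nonzero) auto
  ultimately have "f z = qpoch_inf (a * z) q / qpoch_inf z q"
    by (simp add: field_simps)
  then show ?thesis
    using qbinomial_series_sums[OF q z, of a] unfolding f_def by simp
qed

section \<open>The one-variable series\<close>

definition phi_coeff :: "complex \<Rightarrow> complex \<Rightarrow> complex \<Rightarrow> complex \<Rightarrow> complex \<Rightarrow> complex \<Rightarrow> nat \<Rightarrow> complex"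
  where "phi_coeff r s t u v Q k =
           qpoch r Q k * qpoch s Q k * qpoch t Q k / (qpoch u Q k * qpoch v Q k)"

lemma qphi_eq_sum_phi_coeff:
  "qphi r s t u v M z w Q = (\<Sum>k\<le>M. qbinom Q M k * phi_coeff r s t u v Q k * z ^ (M - k) * w ^ k)"
  by (simp add: qphi_def phi_coeff_def)

lemma Bseq_phi_coeff:
  fixes Q u v :: complex
  assumes "norm Q < 1" "\<And>i. 1 - u * Q ^ i \<noteq> 0" "\<And>i. 1 - v * Q ^ i \<noteq> 0"
  shows "Bseq (phi_coeff r s t u v Q)"
  unfolding phi_coeff_def divide_inverse inverse_mult_distrib
  by (intro Bseq_mult Bseq_qpoch Bseq_inverse_qpoch assms)

lemma geometric_has_sum:
  fixes x :: real
  assumes "0 \<le> x" "x < 1"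
  shows "((\<lambda>k. x ^ k) has_sum (1 / (1 - x))) UNIV"
  using assms by (intro sums_nonneg_imp_has_sum geometric_sums) auto

lemma summable_on_geometric_pairs:
  fixes a c :: real
  assumes "0 \<le> a" "a < 1" "0 \<le> c" "c < 1"
  shows "(\<lambda>(j, k). a ^ j * c ^ k) summable_on UNIV \<times> UNIV"
proof (rule summable_on_SigmaI)
  show "((\<lambda>k. case (j, k) of (j, k) \<Rightarrow> a ^ j * c ^ k) has_sum (a ^ j * (1 / (1 - c)))) UNIV" for j
    using has_sum_cmult_right[OF geometric_has_sum[OF assms(3,4)], of "a ^ j"] by simp
  show "(\<lambda>j. a ^ j * (1 / (1 - c))) summable_on UNIV"
    using has_sum_cmult_left[OF geometric_has_sum[OF assms(1,2)]] by (rule has_sum_imp_summable)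
qed (use assms in auto)

lemma qbinomial_theorem_shifted:
  fixes b Q z :: complex
  assumes Q: "norm Q < 1" and z: "norm z < 1" and hbz: "\<And>i. 1 - b * z * Q ^ i \<noteq> 0"
  shows "(\<lambda>j. qpoch b Q (j + k) / qpoch Q Q j * z ^ j)
           sums (qpoch b Q k / qpoch (b * z) Q k * (qpoch_inf (b * z) Q / qpoch_inf z Q))"
proof -
  have "(\<lambda>j. qpoch b Q (j + k) / qpoch Q Q j * z ^ j)
        = (\<lambda>j. qpoch b Q k * (qpoch (b * Q ^ k) Q j / qpoch Q Q j * z ^ j))"
    by (simp add: add.commute[of _ k] qpoch_add mult.assoc)
  moreover have "qpoch_inf (b * z) Q = qpoch (b * z) Q k * qpoch_inf (b * Q ^ k * z) Q"
    using qpoch_inf_eq_qpoch_mult[OF Q, of "b * z" k] by (simp add: mult_ac)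
  ultimately show ?thesis
    using sums_mult[OF qbinomial_theorem[OF Q z, of "b * Q ^ k"], of "qpoch b Q k"]
      qpoch_nonzero[OF hbz, of k] by simp
qed

lemma diagonal_sums_eq_row_sums:
  fixes G :: "nat \<times> nat \<Rightarrow> complex"
  assumes summable: "G summable_on UNIV \<times> UNIV"
    and rows: "\<And>k. ((\<lambda>j. G (j, k)) has_sum R k) UNIV"
  obtains S where "R sums S" and "(\<lambda>M. \<Sum>k\<le>M. G (M - k, k)) sums S"
proof -
  obtain S where GS: "(G has_sum S) (UNIV \<times> UNIV)"
    using summable has_sum_infsum by blast
  have "((\<lambda>(k, j). G (j, k)) has_sum S) (UNIV \<times> UNIV)"
    using GS by (subst has_sum_reindex_bij_witness[where i=prod.swap and j=prod.swap
        and T="UNIV \<times> UNIV" and h=G and s'=S]) auto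
  then have "(R has_sum S) UNIV"
    by (rule has_sum_SigmaD) (use rows in auto)
  moreover have "((\<lambda>(M, k). G (M - k, k)) has_sum S) (SIGMA M:UNIV. {..M})"
    using GS by (subst has_sum_reindex_bij_witness[where j="\<lambda>(M, k). (M - k, k)"
        and i="\<lambda>(j, k). (j + k, k)" and T="UNIV \<times> UNIV" and h=G and s'=S]) auto
  then have "((\<lambda>M. \<Sum>k\<le>M. G (M - k, k)) has_sum S) UNIV"
    by (rule has_sum_SigmaD) auto
  ultimately show ?thesis
    using that has_sum_imp_sums by blast
qed

lemma qpoch_double_coeff_bound:
  fixes Q :: complex
  assumes Q: "norm Q < 1" and "Bseq A"
  obtains K where
    "\<And>j k. norm (qpoch b Q (j + k) * inverse (qpoch Q Q j) * inverse (qpoch Q Q k) * A k) \<le> K"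
proof -
  have qq_factor_nz: "1 - Q * Q ^ i \<noteq> 0" for i
    using Q by (intro one_minus_mult_power_nonzero) auto
  obtain Kb where Kb: "Kb > 0" "\<And>N. norm (qpoch b Q N) \<le> Kb"
    using Bseq_qpoch[OF Q] by (metis BseqE)
  obtain Kq where Kq: "Kq > 0" "\<And>N. norm (inverse (qpoch Q Q N)) \<le> Kq"
    using Bseq_inverse_qpoch[OF Q qq_factor_nz] by (metis BseqE)
  obtain KA where KA: "KA > 0" "\<And>k. norm (A k) \<le> KA"
    using \<open>Bseq A\<close> by (metis BseqE)
  have "norm (qpoch b Q (j + k) * inverse (qpoch Q Q j) * inverse (qpoch Q Q k) * A k)
        \<le> Kb * Kq * Kq * KA" for j k
    unfolding norm_mult using Kb(1) Kq(1) by (intro mult_mono Kb Kq KA) auto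
  then show ?thesis
    using that by blast
qed

text \<open>
  Expanding \<open>(b;q)\<^sub>M/(q;q)\<^sub>M\<close> times the q-binomial coefficient gives a double series in
  \<open>z\<^sup>j w\<^sup>k\<close>; summing it over \<open>j\<close> first with the q-binomial theorem produces the right-hand side.
\<close>

theorem sum_qpoch_qphi:
  fixes Q b z w r s t u v :: complex
  assumes Q: "norm Q < 1" and z: "norm z < 1" and w: "norm w < 1"
    and hu: "\<And>i. 1 - u * Q ^ i \<noteq> 0" and hv: "\<And>i. 1 - v * Q ^ i \<noteq> 0"
    and hbz: "\<And>i. 1 - b * z * Q ^ i \<noteq> 0"
  shows "(\<lambda>M. inverse (qpoch Q Q M) * qpoch b Q M * qphi r s t u v M z w Q) sums
           (qpoch_inf (b * z) Q / qpoch_inf z Q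
             * (\<Sum>N. (qpoch r Q N * qpoch s Q N * qpoch t Q N * qpoch b Q N)
                      / (qpoch Q Q N * qpoch u Q N * qpoch v Q N * qpoch (b * z) Q N) * w ^ N))"
proof -
  define A where "A = phi_coeff r s t u v Q"
  define G where "G = (\<lambda>(j, k). qpoch b Q (j + k) * inverse (qpoch Q Q j) * inverse (qpoch Q Q k)
                               * A k * z ^ j * w ^ k)"
  define C where "C = qpoch_inf (b * z) Q / qpoch_inf z Q"
  define d where "d N = (qpoch r Q N * qpoch s Q N * qpoch t Q N * qpoch b Q N)
                      / (qpoch Q Q N * qpoch u Q N * qpoch v Q N * qpoch (b * z) Q N) * w ^ N" for N
  have qq_nz: "qpoch Q Q n \<noteq> 0" for n
    using Q by (rule qpoch_qq_nonzero)
  obtain K where K: "\<And>j k. norm (qpoch b Q (j + k) * inverse (qpoch Q Q j) * inverse (qpoch Q Q k) * A k) \<le> K"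
    using qpoch_double_coeff_bound[OF Q Bseq_phi_coeff[OF Q hu hv]] unfolding A_def by blast
  have G_bound: "norm (G (j, k)) \<le> K * (norm z ^ j * norm w ^ k)" for j k
  proof -
    have "norm (G (j, k)) = norm (qpoch b Q (j + k) * inverse (qpoch Q Q j) * inverse (qpoch Q Q k) * A k)
                            * (norm z ^ j * norm w ^ k)"
      by (simp add: G_def norm_mult norm_power)
    also have "\<dots> \<le> K * (norm z ^ j * norm w ^ k)"
      by (rule mult_right_mono[OF K]) simp
    finally show ?thesis .
  qed
  have "(\<lambda>x. norm (G x)) summable_on UNIV \<times> UNIV"
  proof (rule Infinite_Sum.abs_summable_on_comparison_test')
    show "(\<lambda>x. K * (case x of (j, k) \<Rightarrow> norm z ^ j * norm w ^ k)) summable_on UNIV \<times> UNIV"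
      using z w by (intro summable_on_cmult_right summable_on_geometric_pairs) auto
    show "norm (G x) \<le> K * (case x of (j, k) \<Rightarrow> norm z ^ j * norm w ^ k)" for x
      using G_bound by (cases x) auto
  qed
  then have "G summable_on UNIV \<times> UNIV"
    by (rule abs_summable_summable)
  moreover have "((\<lambda>j. G (j, k)) has_sum (C * d k)) UNIV" for k
  proof (rule norm_summable_imp_has_sum)
    show "summable (\<lambda>j. norm (G (j, k)))"
    proof (rule summable_comparison_test')
      show "summable (\<lambda>j. K * norm w ^ k * norm z ^ j)"
        using z by (intro summable_mult summable_geometric) auto
      show "norm (norm (G (j, k))) \<le> K * norm w ^ k * norm z ^ j" for j
        using G_bound[of j k] by (simp add: mult_ac)
    qed
    have "G (j, k) = inverse (qpoch Q Q k) * A k * w ^ k * (qpoch b Q (j + k) / qpoch Q Q j * z ^ j)"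
      for j
      by (simp add: G_def divide_inverse mult_ac)
    moreover have "inverse (qpoch Q Q k) * A k * w ^ k * (qpoch b Q k / qpoch (b * z) Q k * C)
                   = C * d k"
      unfolding A_def phi_coeff_def d_def
      using qq_nz[of k] qpoch_nonzero[OF hu, of k] qpoch_nonzero[OF hv, of k] qpoch_nonzero[OF hbz, of k]
      by (simp add: field_simps)
    ultimately show "(\<lambda>j. G (j, k)) sums (C * d k)"
      using sums_mult[OF qbinomial_theorem_shifted[OF Q z hbz, of k], of "inverse (qpoch Q Q k) * A k * w ^ k"]
      unfolding C_def by simp
  qed
  ultimately obtain S where S: "(\<lambda>k. C * d k) sums S" "(\<lambda>M. \<Sum>k\<le>M. G (M - k, k)) sums S"
    by (rule diagonal_sums_eq_row_sums)
  have "qpoch_inf z Q \<noteq> 0"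
    using Q z by (intro qpoch_inf_nonzero one_minus_mult_power_nonzero) auto
  then have "C \<noteq> 0"
    unfolding C_def using qpoch_inf_nonzero[OF Q hbz] by simp
  then have "S = C * suminf d"
    using S(1) sums_mult_iff[of C d "S / C"] by (simp add: sums_iff)
  moreover have "(\<Sum>k\<le>M. G (M - k, k)) = inverse (qpoch Q Q M) * qpoch b Q M * qphi r s t u v M z w Q"
    for M
    unfolding qphi_eq_sum_phi_coeff sum_distrib_left
  proof (rule sum.cong[OF refl])
    fix k assume "k \<in> {..M}"
    then show "G (M - k, k) = inverse (qpoch Q Q M) * qpoch b Q M
                 * (qbinom Q M k * phi_coeff r s t u v Q k * z ^ (M - k) * w ^ k)"
      using qq_nz[of M] by (simp add: G_def A_def qbinom_def divide_inverse mult_ac)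
  qed
  ultimately show ?thesis
    using S(2) unfolding C_def d_def by simp
qed

lemma linear_geometric_bound:
  fixes \<mu> \<rho> :: real
  assumes "0 \<le> \<mu>" "\<mu> < \<rho>"
  obtains C where "\<And>M. real (M + 1) * \<mu> ^ M \<le> C * \<rho> ^ M"
proof -
  define t where "t = \<mu> / \<rho>"
  have t: "0 \<le> t" "t < 1"
    using assms by (auto simp: t_def divide_simps)
  have "(\<lambda>M. of_nat M * t ^ M) \<longlonglongrightarrow> (0::real)"
    by (rule powser_times_n_limit_0) (use t in simp)
  then have "(\<lambda>M. of_nat M * t ^ M + t ^ M) \<longlonglongrightarrow> (0::real)"
    using LIMSEQ_power_zero[of t] t by (intro tendsto_add_zero) auto
  then have "Bseq (\<lambda>M. of_nat M * t ^ M + t ^ M)"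
    using convergent_imp_Bseq convergentI by blast
  then obtain C where C: "\<And>M. norm (of_nat M * t ^ M + t ^ M) \<le> C"
    by (auto simp: Bseq_def)
  have "real (M + 1) * \<mu> ^ M \<le> C * \<rho> ^ M" for M
  proof -
    have "real (M + 1) * \<mu> ^ M = (of_nat M * t ^ M + t ^ M) * \<rho> ^ M"
      using assms by (simp add: t_def power_divide algebra_simps)
    also have "\<dots> \<le> C * \<rho> ^ M"
      using C[of M] t assms by (intro mult_right_mono) auto
    finally show ?thesis .
  qed
  then show ?thesis
    using that by blast
qed

lemma norm_qphi_bound:
  fixes Q u v :: complex
  assumes Q: "norm Q < 1" and hu: "\<And>i. 1 - u * Q ^ i \<noteq> 0" and hv: "\<And>i. 1 - v * Q ^ i \<noteq> 0"
  obtains K where "K > 0"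
    "\<And>M. norm (qphi r s t u v M z w Q) \<le> K * (real (M + 1) * max (norm z) (norm w) ^ M)"
proof -
  define \<mu> where "\<mu> = max (norm z) (norm w)"
  have qq_factor_nz: "1 - Q * Q ^ i \<noteq> 0" for i
    using Q by (intro one_minus_mult_power_nonzero) auto
  obtain K1 where K1: "K1 > 0" "\<And>N. norm (qpoch Q Q N) \<le> K1"
    using Bseq_qpoch[OF Q] by (metis BseqE)
  obtain Kq where Kq: "Kq > 0" "\<And>N. norm (inverse (qpoch Q Q N)) \<le> Kq"
    using Bseq_inverse_qpoch[OF Q qq_factor_nz] by (metis BseqE)
  obtain KA where KA: "KA > 0" "\<And>k. norm (phi_coeff r s t u v Q k) \<le> KA"
    using Bseq_phi_coeff[OF Q hu hv] by (metis BseqE)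
  define K where "K = K1 * Kq * Kq * KA"
  have term_bound: "norm (qbinom Q M k * phi_coeff r s t u v Q k * z ^ (M - k) * w ^ k) \<le> K * \<mu> ^ M"
    if "k \<le> M" for M k
  proof -
    have "norm (qbinom Q M k * phi_coeff r s t u v Q k * z ^ (M - k) * w ^ k)
          = norm (qpoch Q Q M) * norm (inverse (qpoch Q Q k)) * norm (inverse (qpoch Q Q (M - k)))
            * norm (phi_coeff r s t u v Q k) * (norm z ^ (M - k) * norm w ^ k)"
      by (simp add: qbinom_def norm_mult norm_divide norm_power norm_inverse divide_inverse)
    also have "\<dots> \<le> K * (\<mu> ^ (M - k) * \<mu> ^ k)"
      unfolding K_def using K1(1) Kq(1) KA(1)
      by (intro mult_mono K1 Kq KA power_mono) (auto simp: \<mu>_def le_max_iff_disj)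
    also have "\<mu> ^ (M - k) * \<mu> ^ k = \<mu> ^ M"
      using that by (simp flip: power_add)
    finally show ?thesis .
  qed
  have "norm (qphi r s t u v M z w Q) \<le> K * (real (M + 1) * \<mu> ^ M)" for M
  proof -
    have "norm (qphi r s t u v M z w Q)
          \<le> (\<Sum>k\<le>M. norm (qbinom Q M k * phi_coeff r s t u v Q k * z ^ (M - k) * w ^ k))"
      unfolding qphi_eq_sum_phi_coeff by (rule norm_sum)
    also have "\<dots> \<le> (\<Sum>k\<le>M. K * \<mu> ^ M)"
      by (intro sum_mono term_bound) auto
    finally show ?thesis by (simp add: mult_ac)
  qed
  moreover have "K > 0"
    unfolding K_def using K1(1) Kq(1) KA(1) by simp
  ultimately show ?thesis
    using that unfolding \<mu>_def by blast
qed

lemma qpoch_qphi_geometric_bound: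
  fixes Q u v :: complex
  assumes Q: "norm Q < 1" and hu: "\<And>i. 1 - u * Q ^ i \<noteq> 0" and hv: "\<And>i. 1 - v * Q ^ i \<noteq> 0"
    and \<rho>: "max (norm z) (norm w) < \<rho>"
  obtains K where "\<And>N. norm (qpoch b Q N * qphi r s t u v N z w Q) \<le> K * \<rho> ^ N"
proof -
  obtain Kb where Kb: "Kb > 0" "\<And>N. norm (qpoch b Q N) \<le> Kb"
    using Bseq_qpoch[OF Q] by (metis BseqE)
  obtain Kp where Kp: "Kp > 0" "\<And>N. norm (qphi r s t u v N z w Q)
                              \<le> Kp * (real (N + 1) * max (norm z) (norm w) ^ N)"
    using norm_qphi_bound[OF Q hu hv] by blast
  have "0 \<le> max (norm z) (norm w)"
    by (simp add: le_max_iff_disj)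
  then obtain C where C: "\<And>N. real (N + 1) * max (norm z) (norm w) ^ N \<le> C * \<rho> ^ N"
    using linear_geometric_bound \<rho> by blast
  have "norm (qpoch b Q N * qphi r s t u v N z w Q) \<le> Kb * (Kp * (C * \<rho> ^ N))" for N
  proof -
    have "norm (qphi r s t u v N z w Q) \<le> Kp * (C * \<rho> ^ N)"
      using Kp(2)[of N] mult_left_mono[OF C[of N], of Kp] Kp(1) by linarith
    then show ?thesis
      unfolding norm_mult using Kb by (intro mult_mono) auto
  qed
  then show ?thesis
    using that[of "Kb * Kp * C"] by (simp add: mult_ac)
qed

section \<open>Lagrange interpolation\<close>

lemma degree_coeff_prod_linear:
  fixes z :: "'a \<Rightarrow> 'b::field"
  assumes "finite T"
  shows "degree (\<Prod>j\<in>T. [:- z j, 1:]) = card T" "coeff (\<Prod>j\<in>T. [:- z j, 1:]) (card T) = 1"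
proof -
  show "degree (\<Prod>j\<in>T. [:- z j, 1:]) = card T"
    by (subst degree_prod_eq_sum_degree) auto
  moreover have "lead_coeff (\<Prod>j\<in>T. [:- z j, 1:]) = 1"
    by (simp add: lead_coeff_prod)
  ultimately show "coeff (\<Prod>j\<in>T. [:- z j, 1:]) (card T) = 1"
    by simp
qed

lemma lagrange_interpolation:
  fixes z :: "'a \<Rightarrow> 'b::field" and p :: "'b poly"
  assumes fin: "finite S" and card: "card S = Suc d" and inj: "inj_on z S" and deg: "degree p \<le> d"
  shows "p = (\<Sum>k\<in>S. smult (poly p (z k) / (\<Prod>j\<in>S-{k}. z k - z j)) (\<Prod>j\<in>S-{k}. [:- z j, 1:]))"
    (is "p = ?L")
proof (rule poly_eqI_degree[where A="z ` S"])
  have basis_at_node: "poly (\<Prod>j\<in>S-{k}. [:- z j, 1:]) (z i) = (if k = i then \<Prod>j\<in>S-{k}. z k - z j else 0)"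
    if "i \<in> S" "k \<in> S" for i k
    using that fin by (auto simp: poly_prod intro: prod_zero)
  have node_nz: "(\<Prod>j\<in>S-{k}. z k - z j) \<noteq> 0" if "k \<in> S" for k
    using fin inj that by (auto simp: inj_on_def)
  show "poly p x = poly ?L x" if "x \<in> z ` S" for x
  proof -
    obtain i where i: "i \<in> S" "x = z i"
      using \<open>x \<in> z ` S\<close> by blast
    have "poly ?L (z i) = (\<Sum>k\<in>S. poly p (z k) / (\<Prod>j\<in>S-{k}. z k - z j)
                                   * poly (\<Prod>j\<in>S-{k}. [:- z j, 1:]) (z i))"
      by (simp add: poly_sum)
    also have "\<dots> = (\<Sum>k\<in>S. if k = i then poly p (z i) else 0)"
      by (rule sum.cong) (use basis_at_node[OF i(1)] node_nz in auto)
    also have "\<dots> = poly p (z i)"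
      using i fin by simp
    finally show ?thesis
      using i by simp
  qed
  have "card (z ` S) = Suc d"
    using card inj by (simp add: card_image)
  moreover have "degree (\<Prod>j\<in>S-{k}. [:- z j, 1:]) = d" if "k \<in> S" for k
    using degree_coeff_prod_linear(1)[of "S - {k}" z] fin card that by simp
  then have "degree ?L \<le> d"
    by (intro degree_sum_le order.trans[OF degree_smult_le]) (auto simp: fin)
  ultimately show "degree p < card (z ` S)" "degree ?L < card (z ` S)"
    using deg by auto
qed

lemma sum_lagrange_quotients_eq_coeff:
  fixes z :: "'a \<Rightarrow> 'b::field" and p :: "'b poly"
  assumes "finite S" "card S = Suc d" "inj_on z S" "degree p \<le> d"
  shows "(\<Sum>k\<in>S. poly p (z k) / (\<Prod>j\<in>S-{k}. z k - z j)) = coeff p d"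
proof -
  have "coeff p d = coeff (\<Sum>k\<in>S. smult (poly p (z k) / (\<Prod>j\<in>S-{k}. z k - z j))
                                       (\<Prod>j\<in>S-{k}. [:- z j, 1:])) d"
    by (rule arg_cong[OF lagrange_interpolation[OF assms]])
  moreover have "coeff (\<Prod>j\<in>S-{k}. [:- z j, 1:]) d = 1" if "k \<in> S" for k
    using degree_coeff_prod_linear(2)[of "S - {k}" z] assms(1,2) that by simp
  ultimately show ?thesis
    by (simp add: coeff_sum)
qed

section \<open>Raising one exponent\<close>

lemma prod_pairs_update:
  fixes f f' :: "nat \<Rightarrow> nat \<Rightarrow> 'a::comm_monoid_mult"
  assumes k: "k \<in> {1..n}"
    and upd: "\<And>i j. i \<in> {1..n} \<Longrightarrow> j \<in> {i+1..n} \<Longrightarrow>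
                 f' i j = f i j * (if i = k then g j else if j = k then h i else 1)"
  shows "(\<Prod>i\<in>{1..n}. \<Prod>j\<in>{i+1..n}. f' i j)
           = (\<Prod>i\<in>{1..n}. \<Prod>j\<in>{i+1..n}. f i j) * ((\<Prod>j\<in>{k+1..n}. g j) * (\<Prod>i\<in>{1..<k}. h i))"
proof -
  define e where "e i j = (if i = k then g j else if j = k then h i else 1)" for i j
  have "(\<Prod>i\<in>{1..n}. \<Prod>j\<in>{i+1..n}. f' i j) = (\<Prod>i\<in>{1..n}. \<Prod>j\<in>{i+1..n}. f i j * e i j)"
    using upd unfolding e_def by (intro prod.cong refl) auto
  also have "\<dots> = (\<Prod>i\<in>{1..n}. \<Prod>j\<in>{i+1..n}. f i j) * (\<Prod>i\<in>{1..n}. \<Prod>j\<in>{i+1..n}. e i j)"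
    by (simp add: prod.distrib)
  also have "(\<Prod>i\<in>{1..n}. \<Prod>j\<in>{i+1..n}. e i j)
      = (\<Prod>i\<in>{1..n}. (if i = k then (\<Prod>j\<in>{k+1..n}. g j) else 1) * (if i < k then h i else 1))"
  proof (rule prod.cong[OF refl])
    fix i assume i: "i \<in> {1..n}"
    show "(\<Prod>j\<in>{i+1..n}. e i j) = (if i = k then (\<Prod>j\<in>{k+1..n}. g j) else 1) * (if i < k then h i else 1)"
    proof (cases "i = k")
      case True then show ?thesis by (simp add: e_def)
    next
      case False
      then have "(\<Prod>j\<in>{i+1..n}. e i j) = (\<Prod>j\<in>{i+1..n}. if j = k then h i else 1)"
        by (simp add: e_def)
      also have "\<dots> = (if k \<in> {i+1..n} then h i else 1)"
        by simp
      finally show ?thesis using False k by auto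
    qed
  qed
  also have "\<dots> = (\<Prod>i\<in>{1..n}. if i = k then (\<Prod>j\<in>{k+1..n}. g j) else 1) * (\<Prod>i\<in>{1..n}. if i < k then h i else 1)"
    by (rule prod.distrib)
  also have "(\<Prod>i\<in>{1..n}. if i = k then (\<Prod>j\<in>{k+1..n}. g j) else 1) = (\<Prod>j\<in>{k+1..n}. g j)"
    using k by (simp add: prod.delta')
  also have "(\<Prod>i\<in>{1..n}. if i < k then h i else 1) = (\<Prod>i\<in>{i\<in>{1..n}. i < k}. h i)"
    by (rule prod.inter_filter[symmetric]) simp
  also have "{i\<in>{1..n}. i < k} = {1..<k}" using k by auto
  finally show ?thesis .
qed

lemma sum_pairs_update:
  fixes f f' :: "nat \<Rightarrow> nat \<Rightarrow> 'a::comm_monoid_add"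
  assumes k: "k \<in> {1..n}"
    and upd: "\<And>i j. i \<in> {1..n} \<Longrightarrow> j \<in> {i+1..n} \<Longrightarrow>
                 f' i j = f i j + (if i = k then g j else if j = k then h i else 0)"
  shows "(\<Sum>i\<in>{1..n}. \<Sum>j\<in>{i+1..n}. f' i j)
           = (\<Sum>i\<in>{1..n}. \<Sum>j\<in>{i+1..n}. f i j) + ((\<Sum>j\<in>{k+1..n}. g j) + (\<Sum>i\<in>{1..<k}. h i))"
proof -
  define e where "e i j = (if i = k then g j else if j = k then h i else 0)" for i j
  have "(\<Sum>i\<in>{1..n}. \<Sum>j\<in>{i+1..n}. f' i j) = (\<Sum>i\<in>{1..n}. \<Sum>j\<in>{i+1..n}. f i j + e i j)"
    using upd unfolding e_def by (intro sum.cong refl) auto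
  also have "\<dots> = (\<Sum>i\<in>{1..n}. \<Sum>j\<in>{i+1..n}. f i j) + (\<Sum>i\<in>{1..n}. \<Sum>j\<in>{i+1..n}. e i j)"
    by (simp add: sum.distrib)
  also have "(\<Sum>i\<in>{1..n}. \<Sum>j\<in>{i+1..n}. e i j)
      = (\<Sum>i\<in>{1..n}. (if i = k then (\<Sum>j\<in>{k+1..n}. g j) else 0) + (if i < k then h i else 0))"
  proof (rule sum.cong[OF refl])
    fix i assume i: "i \<in> {1..n}"
    show "(\<Sum>j\<in>{i+1..n}. e i j) = (if i = k then (\<Sum>j\<in>{k+1..n}. g j) else 0) + (if i < k then h i else 0)"
    proof (cases "i = k")
      case True then show ?thesis by (simp add: e_def)
    next
      case False
      then have "(\<Sum>j\<in>{i+1..n}. e i j) = (\<Sum>j\<in>{i+1..n}. if j = k then h i else 0)"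
        by (simp add: e_def)
      also have "\<dots> = (if k \<in> {i+1..n} then h i else 0)"
        by simp
      finally show ?thesis using False k by auto
    qed
  qed
  also have "\<dots> = (\<Sum>i\<in>{1..n}. if i = k then (\<Sum>j\<in>{k+1..n}. g j) else 0) + (\<Sum>i\<in>{1..n}. if i < k then h i else 0)"
    by (rule sum.distrib)
  also have "(\<Sum>i\<in>{1..n}. if i = k then (\<Sum>j\<in>{k+1..n}. g j) else 0) = (\<Sum>j\<in>{k+1..n}. g j)"
    using k by (simp add: sum.delta')
  also have "(\<Sum>i\<in>{1..n}. if i < k then h i else 0) = (\<Sum>i\<in>{i\<in>{1..n}. i < k}. h i)"
    by (rule sum.inter_filter[symmetric]) simp
  also have "{i\<in>{1..n}. i < k} = {1..<k}" using k by auto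
  finally show ?thesis .
qed

lemma atLeastAtMost_remove_split:
  fixes k n :: nat
  assumes "k \<in> {1..n}"
  shows "{1..n} - {k} = {1..<k} \<union> {k+1..n}" "{1..<k} \<inter> {k+1..n} = {}"
  using assms by auto

lemma prod_remove_split:
  fixes g :: "nat \<Rightarrow> 'a::comm_monoid_mult"
  assumes "k \<in> {1..n}"
  shows "(\<Prod>j\<in>{1..n}-{k}. g j) = (\<Prod>j\<in>{k+1..n}. g j) * (\<Prod>j\<in>{1..<k}. g j)"
  unfolding atLeastAtMost_remove_split[OF assms] by (subst prod.union_disjoint) (use assms in \<open>auto simp: mult.commute\<close>)

lemma sum_remove_split:
  fixes g :: "nat \<Rightarrow> 'a::comm_monoid_add"
  assumes "k \<in> {1..n}"
  shows "(\<Sum>j\<in>{1..n}-{k}. g j) = (\<Sum>j\<in>{k+1..n}. g j) + (\<Sum>j\<in>{1..<k}. g j)"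
  unfolding atLeastAtMost_remove_split[OF assms] by (subst sum.union_disjoint) (use assms in \<open>auto simp: add.commute\<close>)

lemma prod_fun_upd:
  fixes F :: "nat \<Rightarrow> nat \<Rightarrow> 'a::comm_monoid_mult"
  assumes "finite S" "k \<in> S" "F k v = F k (m k) * c"
  shows "(\<Prod>i\<in>S. F i ((m(k := v)) i)) = (\<Prod>i\<in>S. F i (m i)) * c"
proof -
  have "(\<Prod>i\<in>S. F i ((m(k := v)) i)) = F k v * (\<Prod>i\<in>S-{k}. F i ((m(k := v)) i))"
    using assms by (subst prod.remove[of _ k]) auto
  also have "(\<Prod>i\<in>S-{k}. F i ((m(k := v)) i)) = (\<Prod>i\<in>S-{k}. F i (m i))"
    by (rule prod.cong) auto
  also have "F k v * \<dots> = (F k (m k) * (\<Prod>i\<in>S-{k}. F i (m i))) * c"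
    using assms by (simp add: mult_ac)
  also have "F k (m k) * (\<Prod>i\<in>S-{k}. F i (m i)) = (\<Prod>i\<in>S. F i (m i))"
    using assms by (subst prod.remove[of _ k]) auto
  finally show ?thesis .
qed

lemma sum_fun_upd:
  fixes F :: "nat \<Rightarrow> nat \<Rightarrow> 'a::comm_monoid_add"
  assumes "finite S" "k \<in> S" "F k v = F k (m k) + c"
  shows "(\<Sum>i\<in>S. F i ((m(k := v)) i)) = (\<Sum>i\<in>S. F i (m i)) + c"
proof -
  have "(\<Sum>i\<in>S. F i ((m(k := v)) i)) = F k v + (\<Sum>i\<in>S-{k}. F i ((m(k := v)) i))"
    using assms by (subst sum.remove[of _ k]) auto
  also have "(\<Sum>i\<in>S-{k}. F i ((m(k := v)) i)) = (\<Sum>i\<in>S-{k}. F i (m i))"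
    by (rule sum.cong) auto
  also have "F k v + \<dots> = (F k (m k) + (\<Sum>i\<in>S-{k}. F i (m i))) + c"
    using assms by (simp add: add_ac)
  also have "F k (m k) + (\<Sum>i\<in>S-{k}. F i (m i)) = (\<Sum>i\<in>S. F i (m i))"
    using assms by (subst sum.remove[of _ k]) auto
  finally show ?thesis .
qed

lemma sum_update_Suc:
  fixes m :: "nat \<Rightarrow> nat"
  assumes "k \<in> {1..n}"
  shows "(\<Sum>i\<in>{1..n}. (m(k := Suc (m k))) i) = Suc (\<Sum>i\<in>{1..n}. m i)"
  using sum_fun_upd[where F="\<lambda>i v. v" and c=1, of "{1..n}" k "Suc (m k)" m] assms by simp

section \<open>The weight and its level sums\<close>

definition weight_cross :: "complex \<Rightarrow> nat \<Rightarrow> (nat \<Rightarrow> complex) \<Rightarrow> (nat \<Rightarrow> nat) \<Rightarrow> complex"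
  where "weight_cross Q n x m = (\<Prod>i\<in>{1..n}. \<Prod>j\<in>{i+1..n}.
            (1 - x i / x j * Q powi (int (m i) - int (m j))) / (1 - x i / x j))"

definition weight_poch :: "complex \<Rightarrow> nat \<Rightarrow> (nat \<Rightarrow> complex) \<Rightarrow> (nat \<Rightarrow> nat) \<Rightarrow> complex"
  where "weight_poch Q n x m = (\<Prod>i\<in>{1..n}. \<Prod>j\<in>{1..n}. qpoch (Q * x i / x j) Q (m i))"

definition weight_monomial :: "nat \<Rightarrow> (nat \<Rightarrow> complex) \<Rightarrow> (nat \<Rightarrow> nat) \<Rightarrow> complex"
  where "weight_monomial n x m =
           (\<Prod>i\<in>{1..n}. x i powi (int n * int (m i) - int (\<Sum>i\<in>{1..n}. m i)))"

definition e2 :: "nat \<Rightarrow> (nat \<Rightarrow> nat) \<Rightarrow> nat"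
  where "e2 n m = (\<Sum>i\<in>{1..n}. \<Sum>j\<in>{i+1..n}. m i * m j)"

definition weight_exponent :: "nat \<Rightarrow> (nat \<Rightarrow> nat) \<Rightarrow> int"
  where "weight_exponent n m = int (\<Sum>i\<in>{1..n}. (i - 1) * m i)
           + int (n - 1) * int (\<Sum>i\<in>{1..n}. m i choose 2) - int (e2 n m)"

definition weight :: "complex \<Rightarrow> nat \<Rightarrow> (nat \<Rightarrow> complex) \<Rightarrow> (nat \<Rightarrow> nat) \<Rightarrow> complex"
  where "weight Q n x m = weight_cross Q n x m * inverse (weight_poch Q n x m)
           * weight_monomial n x m * (-1) ^ ((n - 1) * (\<Sum>i\<in>{1..n}. m i))
           * Q powi weight_exponent n m"

lemma Wt_eq_weight: "Wt q n x m = weight (complex_of_real q) n x m"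
  by (simp add: Wt_def Let_def weight_def weight_cross_def weight_poch_def weight_monomial_def
      weight_exponent_def e2_def)

lemma power_int_of_nat_diff:
  fixes Q :: "'a::field"
  assumes "Q \<noteq> 0"
  shows "Q powi (int a - int b) = Q ^ a / Q ^ b"
  using assms by (simp add: power_int_diff)

lemma cross_factor_raise_left:
  fixes a b A B Q :: "'a::field"
  assumes "b \<noteq> 0" "B \<noteq> 0" "a * A \<noteq> b * B"
  shows "1 - a / b * (Q * A / B) = (1 - a / b * (A / B)) * ((Q * (a * A) - b * B) / (a * A - b * B))"
  using assms by (simp add: field_simps)

lemma cross_factor_raise_right:
  fixes a c A C Q :: "'a::field"
  assumes "a \<noteq> 0" "A \<noteq> 0" "Q \<noteq> 0" "a * A \<noteq> c * C"
  shows "1 - c / a * (C / (Q * A)) = (1 - c / a * (C / A)) * ((Q * (a * A) - c * C) / (Q * (a * A - c * C)))"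
  using assms by (simp add: field_simps)

text \<open>The bookkeeping identity behind the recursion: \<open>a, b, c, d, e\<close> stand for the five
  factors of the weight and the other factors are their changes when one exponent is raised.\<close>

lemma weight_step_algebra:
  fixes Q y xk P0 P1 PX X a b c d e :: complex
  assumes "Q \<noteq> 0" "y \<noteq> 0" "P0 \<noteq> 0" "P1 \<noteq> 0" "PX \<noteq> 0" "X \<noteq> 0" "n \<ge> 1"
    and y: "y = xk * Q ^ s"
  shows "- (Q ^ Suc M) * ((-1) ^ n * PX) / (Q * y * P1) *
     ((a * ((P1 / P0) / Q ^ (k - 1))) * inverse (b * (PX * inverse X)) * (c * (xk ^ n * inverse X))
      * (d * (-1) ^ (n - 1)) * (e * (Q ^ (k - 1) * Q ^ (n * s) / Q ^ M)))
   = y ^ (n - 1) / P0 * (a * inverse b * c * d * e)"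
proof -
  obtain n' where n: "n = Suc n'" using assms(7) by (cases n) auto
  have yn: "y ^ n = xk ^ n * Q ^ (n * s)" unfolding y power_mult_distrib mult.commute[of n s] power_mult by simp
  have yn1: "y ^ (n - 1) = y ^ n / y" using assms(2) n by simp
  show ?thesis unfolding yn1 yn using assms n
    by (simp add: field_simps)
qed

locale generic_nodes =
  fixes Q :: complex and n :: nat and x :: "nat \<Rightarrow> complex"
  assumes Q_nonzero: "Q \<noteq> 0" and Q_power_neq_1: "\<And>l. Q ^ Suc l \<noteq> 1" and n_pos: "n \<ge> 1"
    and x_nonzero: "\<And>i. i \<in> {1..n} \<Longrightarrow> x i \<noteq> 0"
    and x_generic: "\<And>i j k. i \<in> {1..n} \<Longrightarrow> j \<in> {1..n} \<Longrightarrow> i \<noteq> j \<Longrightarrow> x i / x j \<noteq> Q powi k"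
begin

definition node :: "(nat \<Rightarrow> nat) \<Rightarrow> nat \<Rightarrow> complex" where "node m i = x i * Q ^ m i"

lemma node_nonzero: "i \<in> {1..n} \<Longrightarrow> node m i \<noteq> 0"
  using x_nonzero Q_nonzero by (simp add: node_def)

lemma x_power_neq: 
  assumes "i \<in> {1..n}" "j \<in> {1..n}" "i \<noteq> j"
  shows "x i * Q ^ a \<noteq> x j * Q ^ b"
proof
  assume "x i * Q ^ a = x j * Q ^ b"
  then have "x i / x j = Q ^ b / Q ^ a"
    using x_nonzero[OF assms(1)] x_nonzero[OF assms(2)] Q_nonzero by (simp add: field_simps)
  also have "\<dots> = Q powi (int b - int a)" using Q_nonzero by (simp add: power_int_diff)
  finally show False using x_generic[OF assms] by blast
qed

lemma inj_on_node: "inj_on (node m) {1..n}"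
  unfolding inj_on_def node_def using x_power_neq by blast

lemma x_neq: "i \<in> {1..n} \<Longrightarrow> j \<in> {1..n} \<Longrightarrow> i \<noteq> j \<Longrightarrow> x i \<noteq> x j"
  using x_power_neq[of i j 0 0] by simp

lemma poch_factor_nonzero:
  assumes i: "i \<in> {1..n}" and j: "j \<in> {1..n}"
  shows "1 - Q * x i / x j * Q ^ l \<noteq> 0"
proof
  assume h: "1 - Q * x i / x j * Q ^ l = 0"
  show False
  proof (cases "i = j")
    case True
    then have "Q ^ Suc l = 1"
      using h x_nonzero[OF i] by (simp add: algebra_simps)
    then show False using Q_power_neq_1 by blast
  next
    case False
    have "x j * Q ^ 0 = x i * Q ^ Suc l"
      using h x_nonzero[OF j] by (simp add: field_simps)
    then show False
      using x_power_neq[OF j i] False by metis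
  qed
qed

lemma weight_cross_step:
  assumes k: "k \<in> {1..n}"
  shows "weight_cross Q n x (m(k := Suc (m k))) = weight_cross Q n x m *
           ((\<Prod>j\<in>{1..n}-{k}. (Q * node m k - node m j) / (node m k - node m j)) / Q ^ (k - 1))"
proof -
  define g where "g j = (Q * node m k - node m j) / (node m k - node m j)" for j
  define h where "h i = (Q * node m k - node m i) / (Q * (node m k - node m i))" for i
  have "weight_cross Q n x (m(k := Suc (m k))) = weight_cross Q n x m * ((\<Prod>j\<in>{k+1..n}. g j) * (\<Prod>i\<in>{1..<k}. h i))"
    unfolding weight_cross_def
  proof (rule prod_pairs_update[OF k])
    fix i j assume i: "i \<in> {1..n}" and j: "j \<in> {i+1..n}"
    then have jn: "j \<in> {1..n}" and ij: "i \<noteq> j" by auto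
    show "(1 - x i / x j * Q powi (int ((m(k := Suc (m k))) i) - int ((m(k := Suc (m k))) j))) / (1 - x i / x j) =
          (1 - x i / x j * Q powi (int (m i) - int (m j))) / (1 - x i / x j) *
          (if i = k then g j else if j = k then h i else 1)"
    proof (cases "i = k")
      case True
      then have "j \<noteq> k" using ij by auto
      then show ?thesis using True
        unfolding power_int_of_nat_diff[OF Q_nonzero] g_def node_def
        using cross_factor_raise_left[where a="x k" and b="x j" and A="Q ^ m k" and B="Q ^ m j" and Q=Q]
          x_nonzero[OF jn] Q_nonzero x_power_neq[of k j "m k" "m j"] k jn ij
        by (simp add: power_Suc)
    next
      case False
      show ?thesis
      proof (cases "j = k")
        case True
        then show ?thesis using False
          unfolding power_int_of_nat_diff[OF Q_nonzero] h_def node_def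
          using cross_factor_raise_right[where a="x k" and c="x i" and A="Q ^ m k" and C="Q ^ m i" and Q=Q]
            x_nonzero[OF k] Q_nonzero x_power_neq[of k i "m k" "m i"] k i ij
          by (simp add: power_Suc)
      next
        case False2: False
        then show ?thesis using False by simp
      qed
    qed
  qed
  also have "(\<Prod>i\<in>{1..<k}. h i) = (\<Prod>i\<in>{1..<k}. g i) / Q ^ (k - 1)"
    by (simp add: h_def g_def prod_dividef prod.distrib)
  also have "(\<Prod>j\<in>{k+1..n}. g j) * ((\<Prod>i\<in>{1..<k}. g i) / Q ^ (k - 1)) = (\<Prod>j\<in>{1..n}-{k}. g j) / Q ^ (k - 1)"
    by (subst prod_remove_split[OF k]) simp
  finally show ?thesis unfolding g_def .
qed

lemma weight_poch_step:
  assumes k: "k \<in> {1..n}"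
  shows "weight_poch Q n x (m(k := Suc (m k))) = weight_poch Q n x m * (\<Prod>j\<in>{1..n}. 1 - Q * x k / x j * Q ^ m k)"
  unfolding weight_poch_def
proof (rule prod_fun_upd[where F="\<lambda>i v. \<Prod>j\<in>{1..n}. qpoch (Q * x i / x j) Q v"])
  show "(\<Prod>j\<in>{1..n}. qpoch (Q * x k / x j) Q (Suc (m k))) =
        (\<Prod>j\<in>{1..n}. qpoch (Q * x k / x j) Q (m k)) * (\<Prod>j\<in>{1..n}. 1 - Q * x k / x j * Q ^ m k)"
    by (simp add: qpoch_Suc prod.distrib)
qed (use k in auto)

lemma weight_monomial_step:
  assumes k: "k \<in> {1..n}"
  shows "weight_monomial n x (m(k := Suc (m k))) = weight_monomial n x m * (x k ^ n * inverse (\<Prod>i\<in>{1..n}. x i))"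
proof -
  define M where "M = (\<Sum>i\<in>{1..n}. m i)"
  have "weight_monomial n x (m(k := Suc (m k))) = (\<Prod>i\<in>{1..n}. x i powi (int n * int ((m(k := Suc (m k))) i) - int (Suc M)))"
    unfolding weight_monomial_def sum_update_Suc[OF k] M_def ..
  also have "\<dots> = (\<Prod>i\<in>{1..n}. x i powi (int n * int (m i) - int M) * ((if i = k then x i ^ n else 1) * inverse (x i)))"
  proof (rule prod.cong[OF refl])
    fix i assume i: "i \<in> {1..n}"
    have e: "int n * int ((m(k := Suc (m k))) i) - int (Suc M) = (int n * int (m i) - int M) + (int (if i = k then n else 0) - 1)"
      by (auto simp: algebra_simps)
    show "x i powi (int n * int ((m(k := Suc (m k))) i) - int (Suc M)) =
          x i powi (int n * int (m i) - int M) * ((if i = k then x i ^ n else 1) * inverse (x i))"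
      unfolding e using x_nonzero[OF i]
      by (simp add: power_int_add power_int_diff divide_inverse)
  qed
  also have "\<dots> = weight_monomial n x m * ((\<Prod>i\<in>{1..n}. if i = k then x i ^ n else 1) * (\<Prod>i\<in>{1..n}. inverse (x i)))"
    unfolding weight_monomial_def M_def by (simp add: prod.distrib)
  also have "(\<Prod>i\<in>{1..n}. if i = k then x i ^ n else 1) = x k ^ n"
    using k by simp
  also have "(\<Prod>i\<in>{1..n}. inverse (x i)) = inverse (\<Prod>i\<in>{1..n}. x i)"
    using prod_inversef[of x "{1..n}"] by (simp add: o_def)
  finally show ?thesis .
qed

lemma sign_step:
  assumes k: "k \<in> {1..n}"
  shows "(-1::complex) ^ ((n - 1) * (\<Sum>i\<in>{1..n}. (m(k := Suc (m k))) i))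
           = (-1) ^ ((n - 1) * (\<Sum>i\<in>{1..n}. m i)) * (-1) ^ (n - 1)"
  unfolding sum_update_Suc[OF k] by (simp add: power_add)

lemma weight_exponent_step:
  assumes k: "k \<in> {1..n}"
  shows "weight_exponent n (m(k := Suc (m k))) = weight_exponent n m + int (k - 1) + int n * int (m k) - int (\<Sum>i\<in>{1..n}. m i)"
proof -
  let ?m = "m(k := Suc (m k))"
  have s1: "(\<Sum>i\<in>{1..n}. (i - 1) * ?m i) = (\<Sum>i\<in>{1..n}. (i - 1) * m i) + (k - 1)"
    by (rule sum_fun_upd[where F="\<lambda>i v. (i - 1) * v"]) (use k in auto)
  have s2: "(\<Sum>i\<in>{1..n}. ?m i choose 2) = (\<Sum>i\<in>{1..n}. m i choose 2) + m k"
    by (rule sum_fun_upd[where F="\<lambda>i v. v choose 2"]) (use k in \<open>auto simp: numeral_2_eq_2\<close>)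
  have s3: "e2 n ?m = e2 n m + ((\<Sum>j\<in>{k+1..n}. m j) + (\<Sum>i\<in>{1..<k}. m i))"
    unfolding e2_def
  proof (rule sum_pairs_update[OF k])
    fix i j assume "i \<in> {1..n}" "j \<in> {i+1..n}"
    then show "?m i * ?m j = m i * m j + (if i = k then m j else if j = k then m i else 0)"
      by auto
  qed
  have s4: "(\<Sum>j\<in>{k+1..n}. m j) + (\<Sum>i\<in>{1..<k}. m i) + m k = (\<Sum>i\<in>{1..n}. m i)"
  proof -
    have "(\<Sum>i\<in>{1..n}. m i) = m k + (\<Sum>i\<in>{1..n}-{k}. m i)" using k by (subst sum.remove[of _ k]) auto
    then show ?thesis using sum_remove_split[OF k, of m] by (simp add: add_ac)
  qed
  show ?thesis
  proof -
    define P where "P = (\<Sum>j\<in>{k+1..n}. m j) + (\<Sum>i\<in>{1..<k}. m i)"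
    define M where "M = (\<Sum>i\<in>{1..n}. m i)"
    define A where "A = (\<Sum>i\<in>{1..n}. (i - 1) * m i)"
    define C where "C = (\<Sum>i\<in>{1..n}. m i choose 2)"
    have "P + m k = M" using s4 unfolding P_def M_def .
    then show ?thesis
      unfolding weight_exponent_def s1 s2 s3 P_def[symmetric] M_def[symmetric] A_def[symmetric] C_def[symmetric] using n_pos
      by (simp add: algebra_simps of_nat_diff)
  qed
qed

lemma prod_node_diff_nonzero:
  assumes k: "k \<in> {1..n}"
  shows "(\<Prod>j\<in>{1..n}-{k}. Q ^ a * node m k - node m j) \<noteq> 0"
proof -
  have "Q ^ a * node m k \<noteq> node m j" if "j \<in> {1..n}" "j \<noteq> k" for j
    using x_power_neq[OF k that(1), of "a + m k" "m j"] that(2) by (simp add: node_def power_add mult_ac)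
  then show ?thesis
    by auto
qed

lemma prod_x_diff_node_nonzero:
  assumes k: "k \<in> {1..n}"
  shows "(\<Prod>j\<in>{1..n}. x j - Q * node m k) \<noteq> 0"
proof -
  have "x k \<noteq> Q * node m k"
    using x_nonzero[OF k] Q_power_neq_1[of "m k"] by (auto simp: node_def)
  moreover have "x j \<noteq> Q * node m k" if "j \<in> {1..n}" "j \<noteq> k" for j
    using x_power_neq[OF that(1) k, of 0 "Suc (m k)"] that(2) by (simp add: node_def mult_ac)
  ultimately have "x j \<noteq> Q * node m k" if "j \<in> {1..n}" for j
    using that by (cases "j = k") auto
  then show ?thesis
    by auto
qed

abbreviation W :: "(nat \<Rightarrow> nat) \<Rightarrow> complex" where "W \<equiv> weight Q n x"

text \<open>
  Lagrange interpolation at the nodes \<open>node m i = x\<^sub>i q\<^bsup>m\<^sub>i\<^esup>\<close> (and at \<open>0\<close>) shows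
  \<open>\<Sum>\<^sub>k alpha k m = 1 - q\<^bsup>|m|\<^esup>\<close> and \<open>\<Sum>\<^sub>k beta k m = 1\<close>, while raising \<open>m\<^sub>k\<close> by one turns
  \<open>alpha k * W\<close> into \<open>beta k * W\<close>.
\<close>

definition alpha :: "nat \<Rightarrow> (nat \<Rightarrow> nat) \<Rightarrow> complex" where
  "alpha k m = - (Q ^ (\<Sum>i\<in>{1..n}. m i)) * (\<Prod>j\<in>{1..n}. node m k - x j) / (node m k * (\<Prod>j\<in>{1..n}-{k}. node m k - node m j))"

definition beta :: "nat \<Rightarrow> (nat \<Rightarrow> nat) \<Rightarrow> complex" where
  "beta k m = node m k ^ (n - 1) / (\<Prod>j\<in>{1..n}-{k}. node m k - node m j)"

lemma alpha_update:
  assumes k: "k \<in> {1..n}"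
  shows "alpha k (m(k := Suc (m k)))
           = - (Q ^ Suc (\<Sum>i\<in>{1..n}. m i)) * ((-1) ^ n * (\<Prod>j\<in>{1..n}. x j - Q * node m k))
             / (Q * node m k * (\<Prod>j\<in>{1..n}-{k}. Q * node m k - node m j))"
proof -
  let ?m = "m(k := Suc (m k))"
  have node_k: "node ?m k = Q * node m k"
    by (simp add: node_def)
  have "(\<Prod>j\<in>{1..n}. node ?m k - x j) = (\<Prod>j\<in>{1..n}. (-1) * (x j - Q * node m k))"
    unfolding node_k by (rule prod.cong) auto
  also have "\<dots> = (\<Prod>j\<in>{1..n}. -1) * (\<Prod>j\<in>{1..n}. x j - Q * node m k)"
    by (rule prod.distrib)
  finally have "(\<Prod>j\<in>{1..n}. node ?m k - x j) = (-1) ^ n * (\<Prod>j\<in>{1..n}. x j - Q * node m k)"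
    by simp
  moreover have "(\<Prod>j\<in>{1..n}-{k}. node ?m k - node ?m j) = (\<Prod>j\<in>{1..n}-{k}. Q * node m k - node m j)"
    unfolding node_k by (rule prod.cong) (auto simp: node_def)
  ultimately show ?thesis
    unfolding alpha_def sum_update_Suc[OF k] node_k by simp
qed

lemma alpha_weight_update:
  assumes k: "k \<in> {1..n}"
  shows "alpha k (m(k := Suc (m k))) * W (m(k := Suc (m k))) = beta k m * W m"
proof -
  let ?m = "m(k := Suc (m k))"
  define y where "y = node m k"
  define M where "M = (\<Sum>i\<in>{1..n}. m i)"
  define P0 where "P0 = (\<Prod>j\<in>{1..n}-{k}. y - node m j)"
  define P1 where "P1 = (\<Prod>j\<in>{1..n}-{k}. Q * y - node m j)"
  define PX where "PX = (\<Prod>j\<in>{1..n}. x j - Q * y)"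
  define X where "X = (\<Prod>j\<in>{1..n}. x j)"
  have y: "y = x k * Q ^ m k"
    by (simp add: y_def node_def)
  have nonzero: "y \<noteq> 0" "X \<noteq> 0" "P0 \<noteq> 0" "P1 \<noteq> 0" "PX \<noteq> 0"
    using node_nonzero[OF k] x_nonzero prod_node_diff_nonzero[OF k, of 0 m]
      prod_node_diff_nonzero[OF k, of 1 m] prod_x_diff_node_nonzero[OF k]
    by (auto simp: y_def X_def P0_def P1_def PX_def)
  have poch_factor: "(\<Prod>j\<in>{1..n}. 1 - Q * x k / x j * Q ^ m k) = PX * inverse X"
  proof -
    have "(\<Prod>j\<in>{1..n}. 1 - Q * x k / x j * Q ^ m k) = (\<Prod>j\<in>{1..n}. (x j - Q * y) * inverse (x j))"
      using x_nonzero by (intro prod.cong refl) (simp add: y divide_simps)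
    also have "\<dots> = PX * inverse X"
      using prod_inversef[of x "{1..n}"] by (simp add: prod.distrib PX_def X_def o_def)
    finally show ?thesis .
  qed
  have exponent_factor: "Q powi weight_exponent n ?m
                         = Q powi weight_exponent n m * (Q ^ (k - 1) * Q ^ (n * m k) / Q ^ M)"
    unfolding weight_exponent_step[OF k] M_def[symmetric] using Q_nonzero
    by (simp add: power_int_add power_int_diff flip: of_nat_mult)
  have "alpha k ?m * W ?m =
     - (Q ^ Suc M) * ((-1) ^ n * PX) / (Q * y * P1) *
     ((weight_cross Q n x m * ((P1 / P0) / Q ^ (k - 1))) * inverse (weight_poch Q n x m * (PX * inverse X))
      * (weight_monomial n x m * (x k ^ n * inverse X))
      * ((-1) ^ ((n - 1) * (\<Sum>i\<in>{1..n}. m i)) * (-1) ^ (n - 1))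
      * (Q powi weight_exponent n m * (Q ^ (k - 1) * Q ^ (n * m k) / Q ^ M)))"
    unfolding alpha_update[OF k] weight_def weight_cross_step[OF k] weight_poch_step[OF k]
      weight_monomial_step[OF k] sign_step[OF k] exponent_factor poch_factor prod_dividef
    by (simp only: y_def M_def P0_def P1_def PX_def X_def)
  also have "\<dots> = y ^ (n - 1) / P0 * (weight_cross Q n x m * inverse (weight_poch Q n x m)
                   * weight_monomial n x m * (-1) ^ ((n - 1) * (\<Sum>i\<in>{1..n}. m i)) * Q powi weight_exponent n m)"
    by (rule weight_step_algebra[OF Q_nonzero nonzero(1,3,4,5,2) n_pos y])
  also have "\<dots> = beta k m * W m"
    unfolding beta_def weight_def P0_def y_def ..
  finally show ?thesis .
qed

lemma prod_node: "(\<Prod>i\<in>{1..n}. node m i) = (\<Prod>i\<in>{1..n}. x i) * Q ^ (\<Sum>i\<in>{1..n}. m i)"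
  by (simp add: node_def prod.distrib power_sum)

lemma alpha_sum:
  "(\<Sum>k\<in>{1..n}. alpha k m) = 1 - Q ^ (\<Sum>i\<in>{1..n}. m i)"
proof -
  define z where "z i = (if i = 0 then 0 else node m i)" for i
  define p where "p = (\<Prod>j\<in>{1..n}. [:- x j, 1:])"
  define M where "M = (\<Sum>i\<in>{1..n}. m i)"
  define X where "X = (\<Prod>j\<in>{1..n}. x j)"
  have Xnz: "X \<noteq> 0" unfolding X_def using x_nonzero by auto
  have pd: "degree p = n" and pc: "coeff p n = 1"
    using degree_coeff_prod_linear[of "{1..n}" x] unfolding p_def by simp_all
  have inj: "inj_on z {0..n}"
  proof -
    have "inj_on z {1..n} = inj_on (node m) {1..n}"
      by (rule inj_on_cong) (simp add: z_def)
    moreover have "z 0 \<notin> z ` {1..n}"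
      using node_nonzero by (auto simp: z_def)
    moreover have "{0..n} = insert 0 {1..n}"
      by auto
    ultimately show ?thesis
      using inj_on_node by simp
  qed
  have L: "(\<Sum>k\<in>{0..n}. poly p (z k) / (\<Prod>j\<in>{0..n}-{k}. (z k - z j))) = 1"
    using sum_lagrange_quotients_eq_coeff[of "{0..n}" n z p] inj pd pc by simp
  have t0: "poly p (z 0) / (\<Prod>j\<in>{0..n}-{0}. (z 0 - z j)) = 1 / Q ^ M"
  proof -
    have "{0..n}-{0} = {1..n}" by auto
    then have "(\<Prod>j\<in>{0..n}-{0}. (z 0 - z j)) = (\<Prod>j\<in>{1..n}. (-1) * node m j)"
      by (auto simp: z_def intro!: prod.cong)
    also have "\<dots> = (\<Prod>j\<in>{1..n}. (-1::complex)) * (\<Prod>j\<in>{1..n}. node m j)" by (rule prod.distrib)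
    also have "\<dots> = (-1) ^ n * (X * Q ^ M)"
      unfolding prod_node X_def M_def by simp
    finally have d: "(\<Prod>j\<in>{0..n}-{0}. (z 0 - z j)) = (-1) ^ n * (X * Q ^ M)" .
    have "poly p (z 0) = (\<Prod>j\<in>{1..n}. (-1) * x j)"
      by (simp add: p_def z_def poly_prod)
    also have "\<dots> = (\<Prod>j\<in>{1..n}. (-1::complex)) * X" unfolding X_def by (rule prod.distrib)
    also have "\<dots> = (-1) ^ n * X" by simp
    finally show ?thesis unfolding d using Xnz Q_nonzero by simp
  qed
  have tk: "poly p (z k) / (\<Prod>j\<in>{0..n}-{k}. (z k - z j)) = - (alpha k m / Q ^ M)" if k: "k \<in> {1..n}" for k
  proof -
    have "{0..n}-{k} = insert 0 ({1..n}-{k})" using k by auto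
    then have "(\<Prod>j\<in>{0..n}-{k}. (z k - z j)) = (node m k - 0) * (\<Prod>j\<in>{1..n}-{k}. (node m k - node m j))"
      using k by (auto simp: z_def intro!: prod.cong)
    moreover have "poly p (z k) = (\<Prod>j\<in>{1..n}. node m k - x j)"
      using k by (simp add: p_def z_def poly_prod)
    ultimately show ?thesis using Q_nonzero unfolding alpha_def M_def by simp
  qed
  have "(\<Sum>k\<in>{0..n}. poly p (z k) / (\<Prod>j\<in>{0..n}-{k}. (z k - z j)))
        = 1 / Q ^ M + (\<Sum>k\<in>{1..n}. - (alpha k m / Q ^ M))"
  proof -
    have "(\<Sum>k\<in>{0..n}. poly p (z k) / (\<Prod>j\<in>{0..n}-{k}. (z k - z j)))
       = poly p (z 0) / (\<Prod>j\<in>{0..n}-{0}. (z 0 - z j)) + (\<Sum>k\<in>{Suc 0..n}. poly p (z k) / (\<Prod>j\<in>{0..n}-{k}. (z k - z j)))"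
      by (rule sum.atLeast_Suc_atMost) simp
    also have "(\<Sum>k\<in>{Suc 0..n}. poly p (z k) / (\<Prod>j\<in>{0..n}-{k}. (z k - z j))) = (\<Sum>k\<in>{1..n}. - (alpha k m / Q ^ M))"
      by (rule sum.cong) (auto simp: tk)
    finally show ?thesis unfolding t0 .
  qed
  with L have "- ((\<Sum>k\<in>{1..n}. alpha k m) / Q ^ M) = 1 - 1 / Q ^ M"
    by (simp add: sum_divide_distrib sum_negf algebra_simps)
  then show ?thesis using Q_nonzero unfolding M_def[symmetric] by (simp add: field_simps)
qed

lemma beta_sum: "(\<Sum>k\<in>{1..n}. beta k m) = 1"
proof -
  have "(\<Sum>k\<in>{1..n}. poly (monom 1 (n - 1)) (node m k) / (\<Prod>j\<in>{1..n}-{k}. (node m k - node m j))) = coeff (monom 1 (n - 1)) (n - 1)"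
    by (rule sum_lagrange_quotients_eq_coeff) (use n_pos inj_on_node in \<open>auto simp: degree_monom_eq\<close>)
  then show ?thesis by (simp add: beta_def poly_monom)
qed

lemma alpha_zero:
  assumes k: "k \<in> {1..n}" and mk: "m k = 0"
  shows "alpha k m = 0"
proof -
  have "(\<Prod>j\<in>{1..n}. node m k - x j) = 0"
  proof (rule prod_zero)
    show "\<exists>j\<in>{1..n}. node m k - x j = 0" using k mk by (intro bexI[of _ k]) (auto simp: node_def)
  qed simp
  then show ?thesis unfolding alpha_def by simp
qed

definition level :: "nat \<Rightarrow> (nat \<Rightarrow> nat) set" where
  "level N = {m \<in> {1..n} \<rightarrow>\<^sub>E (UNIV::nat set). (\<Sum>i\<in>{1..n}. m i) = N}"

lemma finite_level: "finite (level N)"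
proof (rule finite_subset)
  show "level N \<subseteq> {1..n} \<rightarrow>\<^sub>E {..N}"
  proof
    fix m assume m: "m \<in> level N"
    have "m i \<le> N" if "i \<in> {1..n}" for i
      using m that member_le_sum[of i "{1..n}" m] by (auto simp: level_def)
    then show "m \<in> {1..n} \<rightarrow>\<^sub>E {..N}" using m by (auto simp: level_def PiE_def Pi_def)
  qed
  show "finite ({1..n} \<rightarrow>\<^sub>E {..N})" by (rule finite_PiE) auto
qed

lemma level_0: "level 0 = {(\<lambda>i\<in>{1..n}. 0)}"
proof
  show "level 0 \<subseteq> {(\<lambda>i\<in>{1..n}. 0)}"
  proof
    fix m assume m: "m \<in> level 0"
    then have "m i = 0" if "i \<in> {1..n}" for i using that by (auto simp: level_def)
    moreover have "m i = undefined" if "i \<notin> {1..n}" for i using m that by (auto simp: level_def PiE_def extensional_def)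
    ultimately have "m = (\<lambda>i\<in>{1..n}. 0)" by (auto simp: fun_eq_iff)
    then show "m \<in> {(\<lambda>i\<in>{1..n}. 0)}" by simp
  qed
  show "{(\<lambda>i\<in>{1..n}. 0)} \<subseteq> level 0" by (auto simp: level_def)
qed

lemma weight_zero: "W (\<lambda>i\<in>{1..n}. 0) = 1"
proof -
  let ?m = "(\<lambda>i\<in>{1..n}. 0) :: nat \<Rightarrow> nat"
  have "weight_cross Q n x ?m = 1" unfolding weight_cross_def
  proof (intro prod.neutral ballI)
    fix i j assume i: "i \<in> {1..n}" and j: "j \<in> {i+1..n}"
    then have "x i \<noteq> x j" using x_neq[of i j] by auto
    then have "1 - x i / x j \<noteq> 0" using x_nonzero[of j] j by (auto simp: divide_eq_1_iff)
    then show "(1 - x i / x j * Q powi (int (?m i) - int (?m j))) / (1 - x i / x j) = 1"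
      using i j by simp
  qed
  moreover have "weight_poch Q n x ?m = 1" unfolding weight_poch_def by simp
  moreover have "weight_monomial n x ?m = 1" unfolding weight_monomial_def by simp
  moreover have "(-1::complex) ^ ((n - 1) * (\<Sum>i\<in>{1..n}. ?m i)) = 1" by simp
  moreover have "weight_exponent n ?m = 0" unfolding weight_exponent_def e2_def by simp
  ultimately show ?thesis unfolding weight_def by simp
qed

lemma sum_level_Suc_alpha:
  assumes k: "k \<in> {1..n}"
  shows "(\<Sum>m\<in>level (Suc N). alpha k m * W m) = (\<Sum>m\<in>level N. beta k m * W m)"
proof -
  have "(\<Sum>m\<in>level (Suc N). alpha k m * W m) = (\<Sum>m\<in>{m\<in>level (Suc N). m k \<noteq> 0}. alpha k m * W m)"
    by (rule sum.mono_neutral_right) (use finite_level alpha_zero[OF k] in auto)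
  also have "\<dots> = (\<Sum>m\<in>level N. beta k m * W m)"
  proof (rule sum.reindex_bij_witness[symmetric, where j="\<lambda>m. m(k := Suc (m k))" and i="\<lambda>m. m(k := m k - 1)"])
    fix a assume a: "a \<in> level N"
    show "(a(k := Suc (a k)))(k := (a(k := Suc (a k))) k - 1) = a" by simp
    show "a(k := Suc (a k)) \<in> {m \<in> level (Suc N). m k \<noteq> 0}"
      using a k sum_update_Suc[OF k, of a] by (auto simp: level_def PiE_def extensional_def)
    show "alpha k (a(k := Suc (a k))) * W (a(k := Suc (a k))) = beta k a * W a"
      by (rule alpha_weight_update[OF k])
  next
    fix b assume b: "b \<in> {m \<in> level (Suc N). m k \<noteq> 0}"
    then have bk: "b k \<noteq> 0" by simp
    show "(b(k := b k - 1))(k := Suc ((b(k := b k - 1)) k)) = b" using bk by auto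
    have "Suc (\<Sum>i\<in>{1..n}. (b(k := b k - 1)) i) = (\<Sum>i\<in>{1..n}. ((b(k := b k - 1))(k := Suc ((b(k := b k - 1)) k))) i)"
      by (rule sum_update_Suc[OF k, symmetric])
    also have "(b(k := b k - 1))(k := Suc ((b(k := b k - 1)) k)) = b" using bk by auto
    finally show "b(k := b k - 1) \<in> level N"
      using b k by (auto simp: level_def PiE_def extensional_def)
  qed
  finally show ?thesis .
qed

lemma sum_weight_level_Suc:
  "(1 - Q ^ Suc N) * (\<Sum>m\<in>level (Suc N). W m) = (\<Sum>m\<in>level N. W m)"
proof -
  have "(1 - Q ^ Suc N) * (\<Sum>m\<in>level (Suc N). W m) = (\<Sum>m\<in>level (Suc N). (\<Sum>k\<in>{1..n}. alpha k m) * W m)"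
    unfolding sum_distrib_left
  proof (rule sum.cong[OF refl])
    fix m assume "m \<in> level (Suc N)"
    then have "(\<Sum>i\<in>{1..n}. m i) = Suc N" by (simp add: level_def)
    then have "(\<Sum>k\<in>{1..n}. alpha k m) = 1 - Q ^ Suc N" using alpha_sum[of m] by simp
    then show "(1 - Q ^ Suc N) * W m = (\<Sum>k\<in>{1..n}. alpha k m) * W m" by simp
  qed
  also have "\<dots> = (\<Sum>k\<in>{1..n}. \<Sum>m\<in>level (Suc N). alpha k m * W m)"
    unfolding sum_distrib_right by (rule sum.swap)
  also have "\<dots> = (\<Sum>k\<in>{1..n}. \<Sum>m\<in>level N. beta k m * W m)"
    by (rule sum.cong) (auto simp: sum_level_Suc_alpha)
  also have "\<dots> = (\<Sum>m\<in>level N. (\<Sum>k\<in>{1..n}. beta k m) * W m)"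
    unfolding sum_distrib_right by (rule sum.swap)
  also have "\<dots> = (\<Sum>m\<in>level N. W m)" by (simp only: beta_sum mult_1)
  finally show ?thesis .
qed

lemma sum_weight_level: "(\<Sum>m\<in>level N. W m) = inverse (qpoch Q Q N)"
proof (induction N)
  case 0
  have "(\<Sum>m\<in>level 0. W m) = W (\<lambda>i\<in>{1..n}. 0) + sum W {}"
    unfolding level_0 by (rule sum.insert) auto
  also have "sum W {} = 0" by (rule sum.empty)
  finally show ?case unfolding weight_zero by simp
next
  case (Suc N)
  have nz: "1 - Q ^ Suc N \<noteq> 0" using Q_power_neq_1[of N] by simp
  have e: "(1 - Q ^ Suc N) * (\<Sum>m\<in>level (Suc N). W m) = inverse (qpoch Q Q N)"
    using sum_weight_level_Suc[of N] Suc by simp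
  have "(\<Sum>m\<in>level (Suc N). W m) = inverse (qpoch Q Q N) / (1 - Q ^ Suc N)"
    using nz e by (simp add: eq_divide_eq mult.commute)
  also have "\<dots> = inverse (qpoch Q Q (Suc N))"
    by (simp add: qpoch_Suc divide_inverse inverse_mult_distrib)
  finally show ?case .
qed


lemma has_sum_weight_series:
  assumes summable: "(\<lambda>m. W m * g (\<Sum>i\<in>{1..n}. m i)) summable_on ({1..n} \<rightarrow>\<^sub>E UNIV)"
    and sums: "(\<lambda>N. inverse (qpoch Q Q N) * g N) sums S"
  shows "((\<lambda>m. W m * g (\<Sum>i\<in>{1..n}. m i)) has_sum S) ({1..n} \<rightarrow>\<^sub>E UNIV)"
proof -
  define F where "F m = W m * g (\<Sum>i\<in>{1..n}. m i)" for m
  obtain S' where S': "(F has_sum S') ({1..n} \<rightarrow>\<^sub>E UNIV)"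
    using summable unfolding F_def by (auto dest: has_sum_infsum)
  have "((\<lambda>(N, m). F m) has_sum S') (SIGMA N:UNIV. level N)"
    using S' by (subst has_sum_reindex_bij_witness[where j=snd and i="\<lambda>m. (\<Sum>i\<in>{1..n}. m i, m)"
        and T="{1..n} \<rightarrow>\<^sub>E UNIV" and h=F and s'=S']) (auto simp: level_def PiE_def extensional_def)
  then have "((\<lambda>N. \<Sum>m\<in>level N. F m) has_sum S') UNIV"
    by (rule has_sum_SigmaD) (auto intro: has_sum_finite finite_level)
  moreover have "(\<Sum>m\<in>level N. F m) = inverse (qpoch Q Q N) * g N" for N
  proof -
    have "(\<Sum>m\<in>level N. F m) = (\<Sum>m\<in>level N. W m) * g N"
      unfolding F_def sum_distrib_right by (rule sum.cong) (auto simp: level_def)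
    then show ?thesis
      by (simp add: sum_weight_level)
  qed
  ultimately have "(\<lambda>N. inverse (qpoch Q Q N) * g N) sums S'"
    by (simp add: has_sum_imp_sums)
  then have "S' = S"
    using sums by (rule sums_unique2)
  with S' show ?thesis
    unfolding F_def by simp
qed
end

section \<open>Growth of the weight\<close>

lemma choose_two_real: "2 * real (m choose 2) = real m * (real m - 1)"
proof (induction m)
  case 0 then show ?case by simp
next
  case (Suc m)
  have "Suc m choose 2 = (m choose 2) + m" by (simp add: numeral_2_eq_2)
  then show ?case using Suc by (simp add: algebra_simps)
qed

lemma sum_pairs_add:
  fixes g :: "nat \<Rightarrow> real"
  shows "(\<Sum>i\<in>{1..n}. \<Sum>j\<in>{i+1..n}. g i + g j) = (real n - 1) * (\<Sum>i\<in>{1..n}. g i)"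
proof (induction n)
  case 0 then show ?case by simp
next
  case (Suc n)
  have "(\<Sum>i\<in>{1..Suc n}. \<Sum>j\<in>{i+1..Suc n}. g i + g j)
      = (\<Sum>i\<in>{1..n}. \<Sum>j\<in>{i+1..Suc n}. g i + g j) + (\<Sum>j\<in>{Suc n+1..Suc n}. g (Suc n) + g j)"
    by (simp add: sum.cl_ivl_Suc)
  also have "(\<Sum>j\<in>{Suc n+1..Suc n}. g (Suc n) + g j) = 0" by simp
  also have "(\<Sum>i\<in>{1..n}. \<Sum>j\<in>{i+1..Suc n}. g i + g j) = (\<Sum>i\<in>{1..n}. (\<Sum>j\<in>{i+1..n}. g i + g j) + (g i + g (Suc n)))"
    by (rule sum.cong) (auto simp: sum.cl_ivl_Suc)
  also have "\<dots> = (\<Sum>i\<in>{1..n}. \<Sum>j\<in>{i+1..n}. g i + g j) + (\<Sum>i\<in>{1..n}. g i + g (Suc n))"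
    by (rule sum.distrib)
  also have "(\<Sum>i\<in>{1..n}. \<Sum>j\<in>{i+1..n}. g i + g j) = (real n - 1) * (\<Sum>i\<in>{1..n}. g i)"
    by (rule Suc.IH)
  also have "(\<Sum>i\<in>{1..n}. g i + g (Suc n)) = (\<Sum>i\<in>{1..n}. g i) + real n * g (Suc n)"
    by (simp add: sum.distrib)
  finally show ?case by (simp add: sum.cl_ivl_Suc algebra_simps)
qed

lemma weight_exponent_real:
  "real_of_int (weight_exponent n m) = (\<Sum>i\<in>{1..n}. real ((i - 1) * m i))
     + (\<Sum>i\<in>{1..n}. \<Sum>j\<in>{i+1..n}. (real (m i) - real (m j))^2 / 2)
     - (real n - 1) / 2 * real (\<Sum>i\<in>{1..n}. m i)"
proof -
  have c: "real (\<Sum>i\<in>{1..n}. m i choose 2) = (\<Sum>i\<in>{1..n}. real (m i) ^ 2 / 2) - real (\<Sum>i\<in>{1..n}. m i) / 2"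
  proof -
    have "real (\<Sum>i\<in>{1..n}. m i choose 2) = (\<Sum>i\<in>{1..n}. real (m i) ^ 2 / 2 - real (m i) / 2)"
      unfolding of_nat_sum
    proof (rule sum.cong[OF refl])
      fix i show "real (m i choose 2) = real (m i) ^ 2 / 2 - real (m i) / 2"
        using choose_two_real[of "m i"] by (simp add: power2_eq_square algebra_simps)
    qed
    then show ?thesis by (simp add: sum_subtractf sum_divide_distrib)
  qed
  have p: "(\<Sum>i\<in>{1..n}. \<Sum>j\<in>{i+1..n}. (real (m i) - real (m j))^2 / 2)
        = (\<Sum>i\<in>{1..n}. \<Sum>j\<in>{i+1..n}. real (m i) ^ 2 / 2 + real (m j) ^ 2 / 2) - real (e2 n m)"
  proof -
    have "(\<Sum>i\<in>{1..n}. \<Sum>j\<in>{i+1..n}. (real (m i) - real (m j))^2 / 2)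
        = (\<Sum>i\<in>{1..n}. \<Sum>j\<in>{i+1..n}. (real (m i) ^ 2 / 2 + real (m j) ^ 2 / 2) - real (m i * m j))"
      by (intro sum.cong refl) (simp add: power2_eq_square field_simps)
    also have "\<dots> = (\<Sum>i\<in>{1..n}. (\<Sum>j\<in>{i+1..n}. real (m i) ^ 2 / 2 + real (m j) ^ 2 / 2) - (\<Sum>j\<in>{i+1..n}. real (m i * m j)))"
      by (intro sum.cong refl) (rule sum_subtractf)
    also have "\<dots> = (\<Sum>i\<in>{1..n}. \<Sum>j\<in>{i+1..n}. real (m i) ^ 2 / 2 + real (m j) ^ 2 / 2) - (\<Sum>i\<in>{1..n}. \<Sum>j\<in>{i+1..n}. real (m i * m j))"
      by (rule sum_subtractf)
    also have "(\<Sum>i\<in>{1..n}. \<Sum>j\<in>{i+1..n}. real (m i * m j)) = real (e2 n m)"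
      unfolding e2_def of_nat_sum ..
    finally show ?thesis .
  qed
  have p2: "(\<Sum>i\<in>{1..n}. \<Sum>j\<in>{i+1..n}. real (m i) ^ 2 / 2 + real (m j) ^ 2 / 2)
       = (real n - 1) * (\<Sum>i\<in>{1..n}. real (m i) ^ 2 / 2)"
    by (rule sum_pairs_add)
  define SA where "SA = (\<Sum>i\<in>{1..n}. real ((i - 1) * m i))"
  define SC where "SC = real (\<Sum>i\<in>{1..n}. m i choose 2)"
  define S2 where "S2 = (\<Sum>i\<in>{1..n}. real (m i) ^ 2 / 2)"
  define SM where "SM = real (\<Sum>i\<in>{1..n}. m i)"
  define E where "E = real (e2 n m)"
  have c': "SC = S2 - SM / 2" unfolding SC_def S2_def SM_def by (rule c)
  have w: "real_of_int (weight_exponent n m) = SA + real (n - 1) * SC - E"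
    unfolding weight_exponent_def SA_def SC_def E_def by (simp add: of_nat_sum)
  show ?thesis
  proof (cases "n = 0")
    case True then show ?thesis by (simp add: weight_exponent_def e2_def)
  next
    case False
    then have nn: "real (n - 1) = real n - 1" by simp
    show ?thesis unfolding w p p2 SA_def[symmetric] S2_def[symmetric] SM_def[symmetric] E_def[symmetric] nn c'
      by (simp add: algebra_simps)
  qed
qed

lemma cross_factor_bound:
  fixes q :: real and a :: complex and d :: int
  assumes q_pos: "0 < q" and q_less_1: "q < 1" and a_neq_1: "a \<noteq> 1"
  shows "norm ((1 - a * complex_of_real q powi d) / (1 - a)) * q powr (real_of_int d ^ 2 / 2)
           \<le> (1 + norm a) * q powr (-1/2) / norm (1 - a)"
proof -
  have na: "norm (1 - a) > 0" using a_neq_1 by simp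
  have "norm (1 - a * complex_of_real q powi d) \<le> 1 + norm a * q powr real_of_int d"
  proof -
    have "norm (1 - a * complex_of_real q powi d) \<le> norm (1::complex) + norm (a * complex_of_real q powi d)"
      by (rule norm_triangle_ineq4)
    also have "norm (a * complex_of_real q powi d) = norm a * q powr real_of_int d"
      using q_pos by (simp add: norm_mult norm_power_int powr_real_of_int')
    finally show ?thesis by simp
  qed
  then have "norm (1 - a * complex_of_real q powi d) * q powr (real_of_int d ^ 2 / 2)
        \<le> (1 + norm a * q powr real_of_int d) * q powr (real_of_int d ^ 2 / 2)"
    by (rule mult_right_mono) simp
  also have "\<dots> = q powr (real_of_int d ^ 2 / 2) + norm a * q powr (real_of_int d + real_of_int d ^ 2 / 2)"
    by (simp add: powr_add algebra_simps)
  also have "\<dots> \<le> q powr (-1/2) + norm a * q powr (-1/2)"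
  proof (rule add_mono)
    have "q powr (real_of_int d ^ 2 / 2) \<le> q powr 0"
      using q_pos q_less_1 by (intro powr_mono') auto
    also have "\<dots> \<le> q powr (-1/2)"
      using q_pos q_less_1 by (intro powr_mono') auto
    finally show "q powr (real_of_int d ^ 2 / 2) \<le> q powr (-1/2)" .
    have "-1/2 \<le> real_of_int d + real_of_int d ^ 2 / 2"
    proof -
      have "0 \<le> (real_of_int d + 1) ^ 2 / 2" by simp
      then show ?thesis by (simp add: power2_eq_square algebra_simps)
    qed
    then have "q powr (real_of_int d + real_of_int d ^ 2 / 2) \<le> q powr (-1/2)"
      using q_pos q_less_1 by (intro powr_mono') auto
    then show "norm a * q powr (real_of_int d + real_of_int d ^ 2 / 2) \<le> norm a * q powr (-1/2)"
      by (rule mult_left_mono) simp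
  qed
  also have "\<dots> = (1 + norm a) * q powr (-1/2)" by (simp add: algebra_simps)
  finally have "norm (1 - a * complex_of_real q powi d) * q powr (real_of_int d ^ 2 / 2) \<le> (1 + norm a) * q powr (-1/2)" .
  then show ?thesis using na
    by (simp add: norm_divide divide_simps)
qed

lemma summable_on_PiE_prod_powers:
  fixes \<theta> :: "nat \<Rightarrow> real"
  assumes "finite A" and "\<And>i. i \<in> A \<Longrightarrow> 0 \<le> \<theta> i \<and> \<theta> i < 1"
  shows "(\<lambda>m. \<Prod>i\<in>A. \<theta> i ^ m i) summable_on (A \<rightarrow>\<^sub>E (UNIV::nat set))"
  using assms
proof (induction A rule: finite_induct)
  case empty
  then show ?case by simp
next
  case (insert a A)
  have IH: "(\<lambda>m. \<Prod>i\<in>A. \<theta> i ^ m i) summable_on (A \<rightarrow>\<^sub>E (UNIV::nat set))"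
    using insert by auto
  have ta: "0 \<le> \<theta> a" "\<theta> a < 1" using insert by auto
  define SA where "SA = infsum (\<lambda>m. \<Prod>i\<in>A. \<theta> i ^ m i) (A \<rightarrow>\<^sub>E (UNIV::nat set))"
  have hA: "((\<lambda>m. \<Prod>i\<in>A. \<theta> i ^ m i) has_sum SA) (A \<rightarrow>\<^sub>E (UNIV::nat set))"
    unfolding SA_def using IH by (rule has_sum_infsum)
  let ?h = "\<lambda>(y::nat, g::nat \<Rightarrow> nat). g(a := y)"
  have inj: "inj_on ?h (UNIV \<times> (A \<rightarrow>\<^sub>E UNIV))"
    using inj_combinator[of a A "\<lambda>_. UNIV :: nat set"] insert.hyps by simp
  have img: "insert a A \<rightarrow>\<^sub>E (UNIV::nat set) = ?h ` (UNIV \<times> (A \<rightarrow>\<^sub>E UNIV))"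
    using PiE_insert_eq[of a A "\<lambda>_. UNIV :: nat set"] by simp
  have "((\<lambda>m. \<Prod>i\<in>insert a A. \<theta> i ^ m i) \<circ> ?h) summable_on (UNIV \<times> (A \<rightarrow>\<^sub>E UNIV))"
  proof (rule summable_on_SigmaI)
    fix y :: nat
    have "((\<lambda>g. \<theta> a ^ y * (\<Prod>i\<in>A. \<theta> i ^ g i)) has_sum (\<theta> a ^ y * SA)) (A \<rightarrow>\<^sub>E UNIV)"
      by (rule has_sum_cmult_right[OF hA])
    moreover have "((\<lambda>m. \<Prod>i\<in>insert a A. \<theta> i ^ m i) \<circ> ?h) (y, g) = \<theta> a ^ y * (\<Prod>i\<in>A. \<theta> i ^ g i)" for g
    proof -
      have "(\<Prod>i\<in>A. \<theta> i ^ (g(a := y)) i) = (\<Prod>i\<in>A. \<theta> i ^ g i)"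
        using insert.hyps by (intro prod.cong) auto
      then show ?thesis using insert.hyps by simp
    qed
    ultimately show "((\<lambda>g. (((\<lambda>m. \<Prod>i\<in>insert a A. \<theta> i ^ m i) \<circ> ?h) (y, g))) has_sum (\<theta> a ^ y * SA)) (A \<rightarrow>\<^sub>E UNIV)"
      by simp
  next
    have "((\<lambda>y. \<theta> a ^ y * SA) has_sum (1 / (1 - \<theta> a) * SA)) UNIV"
      by (rule has_sum_cmult_left[OF geometric_has_sum[OF ta]])
    then show "(\<lambda>y. \<theta> a ^ y * SA) summable_on UNIV" by (rule has_sum_imp_summable)
  next
    fix y g assume "(y :: nat) \<in> UNIV" "g \<in> A \<rightarrow>\<^sub>E (UNIV :: nat set)"
    show "0 \<le> ((\<lambda>m. \<Prod>i\<in>insert a A. \<theta> i ^ m i) \<circ> ?h) (y, g)"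
      using insert.prems by (auto intro!: prod_nonneg)
  qed
  then show ?case unfolding img summable_on_reindex[OF inj] .
qed

lemma norm_inverse_prod:
  fixes f :: "'a \<Rightarrow> 'b::real_normed_field"
  shows "norm (inverse (\<Prod>i\<in>A. f i)) = (\<Prod>i\<in>A. norm (inverse (f i)))"
  by (simp add: prod_norm[symmetric] prod_inversef[symmetric] o_def)

locale weight_bounds = generic_nodes +
  fixes q :: real
  assumes Q_of_real: "Q = complex_of_real q" and q_pos: "0 < q" and q_less_1: "q < 1"
begin

lemma norm_Q: "norm Q < 1" using Q_of_real q_pos q_less_1 by simp

lemma weight_poch_inverse_bounded:
  obtains KB where "\<And>m. norm (inverse (weight_poch Q n x m)) \<le> KB"
proof -
  have "\<exists>K>0. \<forall>N. norm (inverse (qpoch (Q * x i / x j) Q N)) \<le> K"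
    if "i \<in> {1..n}" "j \<in> {1..n}" for i j
    using Bseq_inverse_qpoch[OF norm_Q poch_factor_nonzero[OF that]] by (simp add: Bseq_def)
  then obtain K where K: "\<And>i j N. i \<in> {1..n} \<Longrightarrow> j \<in> {1..n} \<Longrightarrow>
                            0 < K i j \<and> norm (inverse (qpoch (Q * x i / x j) Q N)) \<le> K i j"
    by metis
  have "norm (inverse (weight_poch Q n x m)) \<le> (\<Prod>i\<in>{1..n}. \<Prod>j\<in>{1..n}. K i j)" for m
    unfolding weight_poch_def norm_inverse_prod
    using K by (intro prod_mono conjI) (auto intro!: prod_nonneg simp: less_imp_le)
  then show ?thesis
    using that by blast
qed

lemma norm_weight_monomial:
  "norm (weight_monomial n x m) = (\<Prod>i\<in>{1..n}. (norm (x i) ^ n / norm (\<Prod>j\<in>{1..n}. x j)) ^ m i)"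
proof -
  define P where "P = norm (\<Prod>j\<in>{1..n}. x j)"
  define M where "M = (\<Sum>i\<in>{1..n}. m i)"
  have Pnz: "P \<noteq> 0" unfolding P_def using x_nonzero by simp
  have "norm (weight_monomial n x m) = (\<Prod>i\<in>{1..n}. norm (x i) ^ (n * m i) / norm (x i) ^ M)"
    unfolding weight_monomial_def prod_norm[symmetric] M_def[symmetric]
  proof (rule prod.cong[OF refl])
    fix i assume i: "i \<in> {1..n}"
    have e: "int n * int (m i) - int M = int (n * m i) - int M" by simp
    have "norm (x i powi (int n * int (m i) - int M)) = norm (x i) powi (int (n * m i) - int M)"
      unfolding e by (simp only: norm_power_int)
    also have "\<dots> = norm (x i) ^ (n * m i) / norm (x i) ^ M"
      using x_nonzero[OF i] by (simp only: power_int_diff norm_eq_zero power_int_of_nat simp_thms)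
    finally show "norm (x i powi (int n * int (m i) - int M)) = norm (x i) ^ (n * m i) / norm (x i) ^ M" .
  qed
  also have "\<dots> = (\<Prod>i\<in>{1..n}. norm (x i) ^ (n * m i)) / (\<Prod>i\<in>{1..n}. norm (x i) ^ M)"
    by (rule prod_dividef)
  also have "(\<Prod>i\<in>{1..n}. norm (x i) ^ M) = P ^ M"
    unfolding P_def prod_norm[symmetric] by (rule prod_power_distrib[symmetric])
  also have "P ^ M = (\<Prod>i\<in>{1..n}. P ^ m i)" unfolding M_def by (rule power_sum)
  also have "(\<Prod>i\<in>{1..n}. norm (x i) ^ (n * m i)) / (\<Prod>i\<in>{1..n}. P ^ m i) = (\<Prod>i\<in>{1..n}. (norm (x i) ^ n / P) ^ m i)"
    by (simp add: prod_dividef power_mult power_divide)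
  finally show ?thesis unfolding P_def .
qed

text \<open>
  Each cross factor of the weight grows at most like \<open>q\<^bsup>-|m\<^sub>i - m\<^sub>j|\<^esup>\<close>, which the Gaussian
  part \<open>q\<^bsup>(m\<^sub>i - m\<^sub>j)\<^sup>2/2\<^esup>\<close> of the power of \<open>q\<close> absorbs.
\<close>

definition pair_gaps :: "(nat \<Rightarrow> nat) \<Rightarrow> real" where
  "pair_gaps m = (\<Sum>i\<in>{1..n}. \<Sum>j\<in>{i+1..n}. (real (m i) - real (m j)) ^ 2 / 2)"

lemma weight_cross_gaussian_bound:
  obtains K where "\<And>m. norm (weight_cross Q n x m) * q powr pair_gaps m \<le> K"
proof -
  define K where "K = (\<Prod>i\<in>{1..n}. \<Prod>j\<in>{i+1..n}.
                         (1 + norm (x i / x j)) * q powr (-1/2) / norm (1 - x i / x j))"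
  have ratio_neq_1: "x i / x j \<noteq> 1" if "i \<in> {1..n}" "j \<in> {i+1..n}" for i j
    using x_neq[of i j] x_nonzero[of j] that by (auto simp: divide_eq_1_iff)
  have "norm (weight_cross Q n x m) * q powr pair_gaps m
        = (\<Prod>i\<in>{1..n}. \<Prod>j\<in>{i+1..n}.
             norm ((1 - x i / x j * Q powi (int (m i) - int (m j))) / (1 - x i / x j))
             * q powr ((real (m i) - real (m j)) ^ 2 / 2))" for m
    unfolding weight_cross_def pair_gaps_def using q_pos
    by (simp add: powr_sum prod_norm prod.distrib)
  also have "\<dots> m \<le> K" for m
    unfolding K_def Q_of_real
  proof (intro prod_mono conjI)
    fix i j assume "i \<in> {1..n}" "j \<in> {i+1..n}"
    then show "norm ((1 - x i / x j * complex_of_real q powi (int (m i) - int (m j))) / (1 - x i / x j))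
                 * q powr ((real (m i) - real (m j)) ^ 2 / 2)
               \<le> (1 + norm (x i / x j)) * q powr (-1/2) / norm (1 - x i / x j)"
      using cross_factor_bound[OF q_pos q_less_1 ratio_neq_1, of i j "int (m i) - int (m j)"] by simp
  qed (auto intro!: prod_nonneg)
  finally show ?thesis
    using that by blast
qed

lemma weight_cross_exponent_bound:
  obtains K where "\<And>m. norm (weight_cross Q n x m) * norm (Q powi weight_exponent n m)
                          \<le> K * (q powr (- (real n - 1) / 2)) ^ (\<Sum>i\<in>{1..n}. m i)"
proof -
  obtain K where K: "\<And>m. norm (weight_cross Q n x m) * q powr pair_gaps m \<le> K"
    using weight_cross_gaussian_bound by blast
  have "norm (weight_cross Q n x m) * norm (Q powi weight_exponent n m)
        \<le> K * (q powr (- (real n - 1) / 2)) ^ (\<Sum>i\<in>{1..n}. m i)" for m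
  proof -
    define SA where "SA = (\<Sum>i\<in>{1..n}. real ((i - 1) * m i))"
    define M where "M = (\<Sum>i\<in>{1..n}. m i)"
    have "norm (Q powi weight_exponent n m) = q powr real_of_int (weight_exponent n m)"
      unfolding Q_of_real using q_pos by (simp add: norm_power_int powr_real_of_int')
    also have "real_of_int (weight_exponent n m) = pair_gaps m + SA + (- (real n - 1) / 2 * real M)"
      unfolding weight_exponent_real SA_def M_def pair_gaps_def by (simp add: field_simps)
    also have "q powr \<dots> = q powr pair_gaps m * q powr SA * q powr (- (real n - 1) / 2 * real M)"
      by (simp only: powr_add)
    finally have "norm (weight_cross Q n x m) * norm (Q powi weight_exponent n m)
        = (norm (weight_cross Q n x m) * q powr pair_gaps m) * q powr SA
          * q powr (- (real n - 1) / 2 * real M)"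
      by (simp add: mult_ac)
    also have "\<dots> \<le> K * 1 * q powr (- (real n - 1) / 2 * real M)"
    proof (intro mult_right_mono mult_mono K)
      show "q powr SA \<le> 1"
        using q_pos q_less_1 unfolding SA_def by (intro powr_le1 sum_nonneg) auto
      show "0 \<le> K"
        using K[of m] by (smt (verit) mult_nonneg_nonneg norm_ge_zero powr_ge_zero)
    qed auto
    also have "q powr (- (real n - 1) / 2 * real M) = (q powr (- (real n - 1) / 2)) ^ M"
      using q_pos by (simp add: powr_power mult.commute)
    finally show ?thesis
      unfolding M_def by simp
  qed
  then show ?thesis
    using that by blast
qed

definition growth :: "nat \<Rightarrow> real" where
  "growth i = norm (x i) ^ n / norm (\<Prod>j\<in>{1..n}. x j) * q powr (- (real n - 1) / 2)"

lemma growth_pos: "i \<in> {1..n} \<Longrightarrow> growth i > 0"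
  unfolding growth_def using x_nonzero q_pos by (auto intro!: mult_pos_pos divide_pos_pos)

lemma inverse_growth:
  assumes "j \<in> {1..n}"
  shows "inverse (growth j) = norm (\<Prod>i\<in>{1..n}. x i) * norm (x j) powi (- int n) * q powr ((real n - 1) / 2)"
proof -
  have "- (real n - 1) / 2 = - ((real n - 1) / 2)"
    by (simp add: field_simps)
  then have "q powr (- (real n - 1) / 2) = inverse (q powr ((real n - 1) / 2))"
    by (simp only: powr_minus)
  moreover have "norm (\<Prod>i\<in>{1..n}. x i) \<noteq> 0"
    using x_nonzero by simp
  ultimately show ?thesis
    unfolding growth_def using x_nonzero[OF assms] by (simp add: power_int_minus field_simps)
qed

lemma weight_bound:
  obtains K where "\<And>m. norm (W m) \<le> K * (\<Prod>i\<in>{1..n}. growth i ^ m i)"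
proof -
  obtain KB where KB: "\<And>m. norm (inverse (weight_poch Q n x m)) \<le> KB"
    using weight_poch_inverse_bounded by blast
  obtain KA where KA: "\<And>m. norm (weight_cross Q n x m) * norm (Q powi weight_exponent n m)
                              \<le> KA * (q powr (- (real n - 1) / 2)) ^ (\<Sum>i\<in>{1..n}. m i)"
    using weight_cross_exponent_bound by blast
  have "norm (W m) \<le> (KA * KB) * (\<Prod>i\<in>{1..n}. growth i ^ m i)" for m
  proof -
    define t where "t = q powr (- (real n - 1) / 2)"
    have "norm (W m) = (norm (weight_cross Q n x m) * norm (Q powi weight_exponent n m))
                        * norm (inverse (weight_poch Q n x m)) * norm (weight_monomial n x m)"
      unfolding weight_def by (simp add: norm_mult norm_power)
    also have "\<dots> \<le> (KA * t ^ (\<Sum>i\<in>{1..n}. m i)) * KB * norm (weight_monomial n x m)"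
    proof -
      have A: "norm (weight_cross Q n x m) * norm (Q powi weight_exponent n m)
               \<le> KA * t ^ (\<Sum>i\<in>{1..n}. m i)"
        using KA[of m] unfolding t_def .
      moreover have "0 \<le> KA * t ^ (\<Sum>i\<in>{1..n}. m i)"
        using A by (smt (verit) mult_nonneg_nonneg norm_ge_zero)
      ultimately show ?thesis
        by (intro mult_right_mono[OF mult_mono[OF A KB]]) auto
    qed
    also have "\<dots> = (KA * KB) * (t ^ (\<Sum>i\<in>{1..n}. m i) * norm (weight_monomial n x m))"
      by (simp add: mult_ac)
    also have "t ^ (\<Sum>i\<in>{1..n}. m i) * norm (weight_monomial n x m) = (\<Prod>i\<in>{1..n}. growth i ^ m i)"
      unfolding norm_weight_monomial power_sum growth_def t_def prod.distrib[symmetric]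
      by (intro prod.cong refl) (simp add: power_mult_distrib[symmetric] mult_ac)
    finally show ?thesis .
  qed
  then show ?thesis
    using that by blast
qed

lemma radius_between:
  assumes "\<And>j. j \<in> {1..n} \<Longrightarrow> \<mu> < inverse (growth j)"
  obtains \<rho> where "\<mu> < \<rho>" and "\<And>j. j \<in> {1..n} \<Longrightarrow> \<rho> * growth j < 1"
proof -
  define L where "L = Min (insert (\<mu> + 1) (inverse ` growth ` {1..n}))"
  have "\<mu> < L"
    unfolding L_def using assms by (subst Min_gr_iff) auto
  have L_le: "L \<le> inverse (growth j)" if "j \<in> {1..n}" for j
    unfolding L_def using that by (intro Min_le) auto
  have "(\<mu> + L) / 2 * growth j < 1" if "j \<in> {1..n}" for j
  proof -
    have "(\<mu> + L) / 2 * growth j < inverse (growth j) * growth j"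
      using growth_pos[OF that] \<open>\<mu> < L\<close> L_le[OF that] by (intro mult_strict_right_mono) auto
    also have "\<dots> = 1"
      using growth_pos[OF that] by simp
    finally show ?thesis .
  qed
  moreover have "\<mu> < (\<mu> + L) / 2"
    using \<open>\<mu> < L\<close> by simp
  ultimately show ?thesis
    using that by blast
qed

lemma summable_weight_series:
  assumes g: "\<And>N. norm (g N) \<le> K * \<rho> ^ N"
    and \<rho>: "0 \<le> \<rho>" "\<And>i. i \<in> {1..n} \<Longrightarrow> \<rho> * growth i < 1"
  shows "(\<lambda>m. W m * g (\<Sum>i\<in>{1..n}. m i)) summable_on ({1..n} \<rightarrow>\<^sub>E UNIV)"
proof -
  obtain KW where KW: "\<And>m. norm (W m) \<le> KW * (\<Prod>i\<in>{1..n}. growth i ^ m i)"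
    using weight_bound by blast
  have bound: "norm (W m * g (\<Sum>i\<in>{1..n}. m i)) \<le> KW * K * (\<Prod>i\<in>{1..n}. (\<rho> * growth i) ^ m i)"
    for m
  proof -
    have "norm (W m * g (\<Sum>i\<in>{1..n}. m i))
          \<le> (KW * (\<Prod>i\<in>{1..n}. growth i ^ m i)) * (K * \<rho> ^ (\<Sum>i\<in>{1..n}. m i))"
      unfolding norm_mult using KW[of m] order.trans[OF norm_ge_zero KW[of m]] by (intro mult_mono g) auto
    also have "\<dots> = KW * K * ((\<Prod>i\<in>{1..n}. \<rho> ^ m i) * (\<Prod>i\<in>{1..n}. growth i ^ m i))"
      unfolding power_sum by (simp only: mult_ac)
    also have "(\<Prod>i\<in>{1..n}. \<rho> ^ m i) * (\<Prod>i\<in>{1..n}. growth i ^ m i)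
               = (\<Prod>i\<in>{1..n}. (\<rho> * growth i) ^ m i)"
      by (simp only: power_mult_distrib prod.distrib)
    finally show ?thesis .
  qed
  have "(\<lambda>m. KW * K * (\<Prod>i\<in>{1..n}. (\<rho> * growth i) ^ m i)) summable_on ({1..n} \<rightarrow>\<^sub>E UNIV)"
  proof (intro summable_on_cmult_right summable_on_PiE_prod_powers)
    show "0 \<le> \<rho> * growth i \<and> \<rho> * growth i < 1" if "i \<in> {1..n}" for i
      using \<rho> growth_pos[OF that] that by simp
  qed simp
  then have "(\<lambda>m. norm (W m * g (\<Sum>i\<in>{1..n}. m i))) summable_on ({1..n} \<rightarrow>\<^sub>E UNIV)"
    using bound by (rule Infinite_Sum.abs_summable_on_comparison_test')
  then show ?thesis
    by (rule abs_summable_summable)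
qed

end

section \<open>The multiple series\<close>

lemma one_minus_mult_power_nonzero_if_not_inverse_power:
  fixes a Q :: "'a::field"
  assumes "\<And>m::nat. a \<noteq> inverse (Q ^ m)" and "Q \<noteq> 0"
  shows "1 - a * Q ^ i \<noteq> 0"
proof
  assume "1 - a * Q ^ i = 0"
  then have "a = inverse (Q ^ i)"
    using assms(2) by (simp add: field_simps)
  with assms(1) show False
    by blast
qed

theorem theorem8:
  fixes q :: real and n :: nat and x :: "nat \<Rightarrow> complex"
    and b z w r s t u v :: complex
  assumes q: "0 < q" "q < 1"
    and n: "n \<ge> 1"
    and x_nz: "\<And>i. i \<in> {1..n} \<Longrightarrow> x i \<noteq> 0"
    and x_gen: "\<And>i j k. i \<in> {1..n} \<Longrightarrow> j \<in> {1..n} \<Longrightarrow> i \<noteq> j \<Longrightarrow>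
                  x i / x j \<noteq> complex_of_real q powi k"
    and u: "\<And>m::nat. u \<noteq> inverse (complex_of_real q ^ m)"
    and v: "\<And>m::nat. v \<noteq> inverse (complex_of_real q ^ m)"
    and bz: "\<And>m::nat. b * z \<noteq> inverse (complex_of_real q ^ m)"
    and zw: "max (cmod z) (cmod w) < 1"
    and zw2: "\<And>j. j \<in> {1..n} \<Longrightarrow>
       max (cmod z) (cmod w) < cmod (\<Prod>i\<in>{1..n}. x i) * cmod (x j) powi (- int n)
                                * q powr ((real n - 1) / 2)"
  shows "((\<lambda>m. Wt q n x m * qpoch b (complex_of_real q) (\<Sum>i\<in>{1..n}. m i)
                 * qphi r s t u v (\<Sum>i\<in>{1..n}. m i) z w (complex_of_real q))
           has_sum
           (qpoch_inf (b * z) (complex_of_real q) / qpoch_inf z (complex_of_real q)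
             * (\<Sum>N. (qpoch r (complex_of_real q) N * qpoch s (complex_of_real q) N
                       * qpoch t (complex_of_real q) N * qpoch b (complex_of_real q) N)
                      / (qpoch (complex_of_real q) (complex_of_real q) N
                         * qpoch u (complex_of_real q) N * qpoch v (complex_of_real q) N
                         * qpoch (b * z) (complex_of_real q) N) * w ^ N)))
         ({1..n} \<rightarrow>\<^sub>E (UNIV :: nat set))"
proof -
  define Q where "Q = complex_of_real q"
  have Q: "norm Q < 1" "Q \<noteq> 0"
    using q by (auto simp: Q_def)
  interpret weight_bounds Q n x q
    using Q q n x_nz x_gen one_minus_mult_power_nonzero[of Q Q]
    by unfold_locales (auto simp: Q_def)
  have factor_nz: "1 - a * Q ^ i \<noteq> 0" if "\<And>m::nat. a \<noteq> inverse (complex_of_real q ^ m)" for a i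
    using one_minus_mult_power_nonzero_if_not_inverse_power[OF that] Q(2) unfolding Q_def by simp
  have "max (cmod z) (cmod w) < inverse (growth j)" if "j \<in> {1..n}" for j
    using zw2[OF that] inverse_growth[OF that] by simp
  then obtain \<rho> where \<rho>: "max (cmod z) (cmod w) < \<rho>" "\<And>j. j \<in> {1..n} \<Longrightarrow> \<rho> * growth j < 1"
    using radius_between by blast
  obtain K where K: "\<And>N. norm (qpoch b Q N * qphi r s t u v N z w Q) \<le> K * \<rho> ^ N"
    using qpoch_qphi_geometric_bound[OF Q(1) factor_nz[OF u] factor_nz[OF v] \<rho>(1)] by blast
  have "0 \<le> \<rho>"
    using \<rho>(1) norm_ge_zero[of z] unfolding max_less_iff_conj by linarith
  then have "(\<lambda>m. W m * (qpoch b Q (\<Sum>i\<in>{1..n}. m i) * qphi r s t u v (\<Sum>i\<in>{1..n}. m i) z w Q))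
               summable_on ({1..n} \<rightarrow>\<^sub>E UNIV)"
    by (rule summable_weight_series[OF K _ \<rho>(2)])
  moreover have "norm z < 1" "norm w < 1"
    using zw by auto
  ultimately show ?thesis
    unfolding Wt_eq_weight Q_def[symmetric] mult.assoc
    using sum_qpoch_qphi[OF Q(1) _ _ factor_nz[OF u] factor_nz[OF v] factor_nz[OF bz], unfolded mult.assoc]
    by (intro has_sum_weight_series)
qed

end
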